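(* Under the setting and with the quantities $\boldsymbol{\Psi}_{i,j}$, $\mathbf{D}_i$ defined in the context, run the following procedure on block arrays $\mathbf{N}_{j,k}$, $\mathbf{P}_{j,k}$ indexed by related pairs $(j,k)$ (i.e. $j=k$, $j\in P_k$, or $k\in P_j$): (1) Initialize $\mathbf{N}_{j,k}=\boldsymbol{\Sigma}^<_{j,j}\big((\mathbf{A}^{-1})_{k,j}\big)^\dagger$ for every related pair $(j,k)$. (2) For $l=1,\dots,\lambda-1$ in increasing order, for every cluster $i$ with $\ell(i)=l$, and for all $j,k\in P_i$: replace $\mathbf{N}_{j,k}$ by $\mathbf{N}_{j,k}+\boldsymbol{\Psi}_{i,j}^T\mathbf{N}_{i,k}$. (3) Set $\mathbf{P}_{j,k}=\mathbf{D}_j^{-1}\mathbf{N}_{j,k}$ for every related pair $(j,k)$. (4) For $l=\lambda-1,\dots,1$ in decreasing order, for every cluster $i$ with $\ell(i)=l$: first, for every $j\in P_i$ replace $\mathbf{P}_{i,j}$ by $\mathbf{P}_{i,j}+\sum_{k\in P_i}\boldsymbol{\Psi}_{i,k}\mathbf{P}_{k,j}$; then set $\mathbf{P}_{j,i}=-(\mathbf{P}_{i,j})^\dagger$ for every $j\in P_i$; then replace $\mathbf{P}_{i,i}$ by $\mathbf{P}_{i,i}+\sum_{j\in P_i}\boldsymbol{\Psi}_{i,j}\mathbf{P}_{j,i}$. Then at termination, for every cluster $i$ and every $j\in P_i\cup\{i\}$, $\mathbf{P}_{i,j}=\mathbf{G}^<_{i,j}$ and $\mathbf{P}_{j,i}=\mathbf{G}^<_{j,i}$,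 where $\mathbf{G}^<=\mathbf{A}^{-1}\boldsymbol{\Sigma}^<(\mathbf{A}^{-1})^\dagger$. In particular all diagonal blocks $\mathbf{G}^<_{i,i}$ are obtained.
   Context: Let $\mathbf{A}\in\mathbb{C}^{n\times n}$ be invertible and complex symmetric ($\mathbf{A}^T=\mathbf{A}$; ${}^T$ is the non-conjugated transpose, $\dagger$ the conjugate transpose). The index set is partitioned into clusters $1,\dots,M$ organized as a rooted tree (as produced by nested dissection: each separator is the parent of the clusters it separates). For a cluster $i$, $P_i$ denotes the set of its ancestors in the tree. Blocks are written $\mathbf{A}_{i,j}$. Assume $\mathbf{A}_{i,j}=\mathbf{0}$ unless $i=j$, $i\in P_j$ or $j\in P_i$. Each cluster $i$ has a level $\ell(i)\in\{1,\dots,\lambda\}$ with $\ell(j)>\ell(i)$ whenever $j\in P_i$; the root is the only cluster of level $\lambda$. Folding: set $\mathbf{A}^{(0)}=\mathbf{A}$. For $l=1,\dots,\lambda-1$: set $\mathbf{A}^{(l)}=\mathbf{A}^{(l-1)}$, and for each cluster $i$ with $\ell(i)=l$: define $\boldsymbol{\Psi}_{i,j}=-(\mathbf{A}^{(l)}_{i,i})^{-1}\mathbf{A}^{(l)}_{i,j}$ for $j\in P_i$; replace $\mathbf{A}^{(l)}_{j,k}$ by $\mathbf{A}^{(l)}_{j,k}+\boldsymbol{\Psi}_{i,j}^T\mathbf{A}^{(l)}_{i,k}$ for all $j,k\in P_i$; and set $\mathbf{A}^{(l)}_{i,j}=\mathbf{A}^{(l)}_{j,i}=\mathbf{0}$ for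 $j\in P_i$. It is assumed that every block $\mathbf{A}^{(l)}_{i,i}$ inverted here is invertible and that the final diagonal blocks are invertible. Let $\mathbf{D}_i$ denote the $(i,i)$ diagonal block of $\mathbf{A}^{(\lambda-1)}$ (which is block diagonal). $\boldsymbol{\Sigma}^<$ is block diagonal with respect to the clusters (diagonal blocks $\boldsymbol{\Sigma}^<_{i,i}$) and skew-Hermitian: $(\boldsymbol{\Sigma}^<)^\dagger=-\boldsymbol{\Sigma}^<$. $(\mathbf{A}^{-1})_{k,j}$ and $\mathbf{G}^<_{i,j}$ denote cluster blocks of the respective matrices. *)

theory Defs
  imports "Jordan_Normal_Form.DL_Submatrix" "Jordan_Normal_Form.Schur_Decomposition"
begin

type_synonym blocks = "nat \<Rightarrow> nat \<Rightarrow> complex mat"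

definition minv :: "complex mat \<Rightarrow> complex mat" where
  "minv X = (SOME Y. Y \<in> carrier_mat (dim_row X) (dim_row X) \<and> inverts_mat X Y \<and> inverts_mat Y X)"

definition cluster :: "(nat \<Rightarrow> nat) \<Rightarrow> nat \<Rightarrow> nat \<Rightarrow> nat set" where
  "cluster cl n i = {k. k < n \<and> cl k = i}"

definition blk :: "(nat \<Rightarrow> nat) \<Rightarrow> nat \<Rightarrow> complex mat \<Rightarrow> nat \<Rightarrow> nat \<Rightarrow> complex mat" where
  "blk cl n X i j = submatrix X (cluster cl n i) (cluster cl n j)"

definition ancestors :: "(nat \<Rightarrow> nat) \<Rightarrow> nat \<Rightarrow> nat \<Rightarrow> nat \<Rightarrow> nat set" where
  "ancestors par r M i = {j. (i, j) \<in> {(a, par a) | a. a \<in> {1..M} \<and> a \<noteq> r}\<^sup>+}"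

definition related :: "(nat \<Rightarrow> nat set) \<Rightarrow> nat \<Rightarrow> nat \<Rightarrow> bool" where
  "related Pa j k \<longleftrightarrow> j = k \<or> j \<in> Pa k \<or> k \<in> Pa j"

definition fwd_order :: "(nat \<Rightarrow> nat) \<Rightarrow> nat \<Rightarrow> nat \<Rightarrow> nat list" where
  "fwd_order lev lam M = concat (map (\<lambda>l. filter (\<lambda>i. lev i = l) [1..<Suc M]) [1..<lam])"

definition bwd_order :: "(nat \<Rightarrow> nat) \<Rightarrow> nat \<Rightarrow> nat \<Rightarrow> nat list" where
  "bwd_order lev lam M = concat (map (\<lambda>l. filter (\<lambda>i. lev i = l) [1..<Suc M]) (rev [1..<lam]))"

definition fold_step :: "(nat \<Rightarrow> nat set) \<Rightarrow> nat \<Rightarrow> blocks \<Rightarrow> blocks" where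
  "fold_step Pa i B = (\<lambda>j k.
     if j \<in> Pa i \<and> k \<in> Pa i then B j k + transpose_mat (- minv (B i i) * B i j) * B i k
     else if (j = i \<and> k \<in> Pa i) \<or> (k = i \<and> j \<in> Pa i) then 0\<^sub>m (dim_row (B j k)) (dim_col (B j k))
     else B j k)"

definition folding :: "(nat \<Rightarrow> nat set) \<Rightarrow> blocks \<Rightarrow> nat list \<Rightarrow> blocks" where
  "folding Pa B0 xs = foldl (\<lambda>B i. fold_step Pa i B) B0 xs"

text \<open>State A^(l) just before cluster i is processed.\<close>
definition state_before :: "(nat \<Rightarrow> nat set) \<Rightarrow> blocks \<Rightarrow> nat list \<Rightarrow> nat \<Rightarrow> blocks" where
  "state_before Pa B0 ord i = folding Pa B0 (takeWhile (\<lambda>x. x \<noteq> i) ord)"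

definition Psi :: "(nat \<Rightarrow> nat set) \<Rightarrow> blocks \<Rightarrow> nat list \<Rightarrow> nat \<Rightarrow> nat \<Rightarrow> complex mat" where
  "Psi Pa B0 ord i j = - minv (state_before Pa B0 ord i i i) * state_before Pa B0 ord i i j"

definition Dblk :: "(nat \<Rightarrow> nat set) \<Rightarrow> blocks \<Rightarrow> nat list \<Rightarrow> nat \<Rightarrow> complex mat" where
  "Dblk Pa B0 ord i = folding Pa B0 ord i i"

definition N_init :: "(nat \<Rightarrow> nat set) \<Rightarrow> (nat \<Rightarrow> nat \<Rightarrow> complex mat) \<Rightarrow> (nat \<Rightarrow> nat \<Rightarrow> complex mat) \<Rightarrow> blocks" where
  "N_init Pa SigB AinvB = (\<lambda>j k. if related Pa j k then SigB j j * mat_adjoint (AinvB k j) else 0\<^sub>m 0 0)"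

definition N_step :: "(nat \<Rightarrow> nat set) \<Rightarrow> (nat \<Rightarrow> complex mat) \<Rightarrow> nat \<Rightarrow> blocks \<Rightarrow> blocks" where
  "N_step Pa Ps i N = (\<lambda>j k. if j \<in> Pa i \<and> k \<in> Pa i then N j k + transpose_mat (Ps j) * N i k else N j k)"

definition P_init :: "(nat \<Rightarrow> nat set) \<Rightarrow> (nat \<Rightarrow> complex mat) \<Rightarrow> blocks \<Rightarrow> blocks" where
  "P_init Pa D N = (\<lambda>j k. if related Pa j k then minv (D j) * N j k else 0\<^sub>m 0 0)"

text \<open>Step (4): the three sub-steps for cluster i; Ps k = Psi_{i,k}.\<close>
definition P_step :: "(nat \<Rightarrow> nat set) \<Rightarrow> (nat \<Rightarrow> complex mat) \<Rightarrow> nat \<Rightarrow> blocks \<Rightarrow> blocks" where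
  "P_step Pa Ps i P =
    (let anc = sorted_list_of_set (Pa i);
         P1 = (\<lambda>a b. if a = i \<and> b \<in> Pa i
                      then foldl (\<lambda>acc k. acc + Ps k * P k b) (P i b) anc else P a b);
         P2 = (\<lambda>a b. if b = i \<and> a \<in> Pa i then - mat_adjoint (P1 i a) else P1 a b);
         P3 = (\<lambda>a b. if a = i \<and> b = i
                      then foldl (\<lambda>acc j. acc + Ps j * P2 j i) (P2 i i) anc else P2 a b)
     in P3)"

definition selinv :: "(nat \<Rightarrow> nat) \<Rightarrow> nat \<Rightarrow> (nat \<Rightarrow> nat) \<Rightarrow> nat \<Rightarrow> nat \<Rightarrow> (nat \<Rightarrow> nat) \<Rightarrow> nat
    \<Rightarrow> complex mat \<Rightarrow> complex mat \<Rightarrow> blocks" where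
  "selinv cl n par r M lev lam A Sig =
    (let Pa = ancestors par r M;
         B0 = blk cl n A;
         ford = fwd_order lev lam M;
         Ps = Psi Pa B0 ford;
         N = foldl (\<lambda>N i. N_step Pa (Ps i) i N) (N_init Pa (blk cl n Sig) (blk cl n (minv A))) ford;
         P0 = P_init Pa (Dblk Pa B0 ford) N
     in foldl (\<lambda>P i. P_step Pa (Ps i) i P) P0 (bwd_order lev lam M))"

end

theory Submission
  imports Defs
begin

(* Folding cluster i performs the block row operations
   row j += Psi(i,j)^T * row i  (j an ancestor of i) on A; step (2) performs the same
   operations on N, whose initial value is the block form of A G = Sigma (A^-1)^H.
   Hence N stays equal to (folded A) * G on the still active clusters, while the row
   of every folded cluster i is frozen at the value it had when i was folded.  Dividing
   the frozen row by D_i gives the identity (P0_identity)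
       G(i,k) = P(i,k) + sum over c in P_i of Psi(i,c) * G(c,k)
   for the initial values P = D^-1 N of step (3).

   Clusters are treated from the root downwards.  When i is reached,
   all blocks among its ancestors are already blocks of G, so the row update of step (4)
   evaluates the identity above, the mirror step uses that G is skew-Hermitian, and the
   diagonal update is the identity once more. *)

section \<open>Matrix arithmetic and conjugate transposes\<close>

lemma mat_adjoint_dims [simp]:
  "dim_row (mat_adjoint X) = dim_col X" "dim_col (mat_adjoint X) = dim_row X"
  unfolding mat_adjoint_def by auto

lemma mat_adjoint_index [simp]:
  "i < dim_col X \<Longrightarrow> j < dim_row X \<Longrightarrow> mat_adjoint X $$ (i, j) = conjugate (X $$ (j, i))"
  unfolding mat_adjoint_def by (simp add: mat_of_rows_index)

lemma mat_adjoint_adjoint [simp]: "mat_adjoint (mat_adjoint X) = X"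
  by (rule eq_matI) auto

lemma mat_adjoint_mult:
  fixes X Y :: "'a :: conjugatable_field mat"
  assumes X: "X \<in> carrier_mat a m" and Y: "Y \<in> carrier_mat m c"
  shows "mat_adjoint (X * Y) = mat_adjoint Y * mat_adjoint X"
proof (rule eq_matI)
  fix i j assume "i < dim_row (mat_adjoint Y * mat_adjoint X)" "j < dim_col (mat_adjoint Y * mat_adjoint X)"
  then have i: "i < c" and j: "j < a" using X Y by auto
  have "mat_adjoint (X * Y) $$ (i, j) = conjugate (\<Sum>s<m. X $$ (j, s) * Y $$ (s, i))"
    using X Y i j by (simp add: scalar_prod_def lessThan_atLeast0)
  also have "\<dots> = (\<Sum>s<m. conjugate (Y $$ (s, i)) * conjugate (X $$ (j, s)))"
    by (simp add: sum_conjugate conjugate_dist_mul mult.commute)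
  also have "\<dots> = (mat_adjoint Y * mat_adjoint X) $$ (i, j)"
    using X Y i j by (simp add: scalar_prod_def lessThan_atLeast0)
  finally show "mat_adjoint (X * Y) $$ (i, j) = (mat_adjoint Y * mat_adjoint X) $$ (i, j)" .
qed (use X Y in auto)

text \<open>Congruence \<open>X S X\<^sup>\<dagger>\<close> preserves skew-Hermitian matrices; this is why
  \<open>G = A\<inverse> \<Sigma> (A\<inverse>)\<^sup>\<dagger>\<close> is skew-Hermitian.\<close>

lemma skew_hermitian_congruence:
  fixes X S :: "'a :: conjugatable_field mat"
  assumes X: "X \<in> carrier_mat m k" and S: "S \<in> carrier_mat k k" and skew: "mat_adjoint S = - S"
  shows "mat_adjoint (X * S * mat_adjoint X) = - (X * S * mat_adjoint X)"
proof -
  have Xa: "mat_adjoint X \<in> carrier_mat k m" using X by auto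
  have "mat_adjoint (X * S * mat_adjoint X) = X * (mat_adjoint S * mat_adjoint X)"
    using mat_adjoint_mult[OF mult_carrier_mat[OF X S] Xa] mat_adjoint_mult[OF X S] by simp
  also have "\<dots> = - (X * (S * mat_adjoint X))"
    unfolding skew using X S Xa by simp
  also have "\<dots> = - (X * S * mat_adjoint X)"
    using X S Xa by simp
  finally show ?thesis .
qed

lemma add_cancel_mat:
  fixes X S T :: "'a :: ab_group_add mat"
  assumes "X \<in> carrier_mat a c" "S \<in> carrier_mat a c" "T \<in> carrier_mat a c"
  shows "(X + S) + (- X + T) = S + T"
  by (rule eq_matI) (use assms in auto)


section \<open>Finite sums of equally sized matrices\<close>

text \<open>Matrices of different dimensions do not form a monoid, so the block sums of the
  block calculus are taken entrywise, with the dimensions of the result fixed in advance.\<close>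

definition msum :: "nat \<Rightarrow> nat \<Rightarrow> 'b set \<Rightarrow> ('b \<Rightarrow> 'a :: comm_monoid_add mat) \<Rightarrow> 'a mat" where
  "msum r c U f = mat r c (\<lambda>(p, q). \<Sum>b\<in>U. f b $$ (p, q))"

lemma msum_carrier [simp]: "msum r c U f \<in> carrier_mat r c"
  and msum_dims [simp]: "dim_row (msum r c U f) = r" "dim_col (msum r c U f) = c"
  unfolding msum_def by auto

lemma msum_index: "p < r \<Longrightarrow> q < c \<Longrightarrow> msum r c U f $$ (p, q) = (\<Sum>b\<in>U. f b $$ (p, q))"
  unfolding msum_def by auto

lemma msum_cong: "(\<And>b. b \<in> U \<Longrightarrow> f b = g b) \<Longrightarrow> msum r c U f = msum r c U g"
  by (rule eq_matI) (auto simp: msum_index)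

lemma msum_insert:
  assumes "finite U" "a \<notin> U" "f a \<in> carrier_mat r c"
  shows "msum r c (insert a U) f = f a + msum r c U f"
  by (rule eq_matI) (use assms in \<open>auto simp: msum_index\<close>)

lemma msum_empty: "msum r c {} f = 0\<^sub>m r c"
  by (rule eq_matI) (auto simp: msum_index)

lemma msum_single: "f a \<in> carrier_mat r c \<Longrightarrow> msum r c {a} f = f a"
  by (rule eq_matI) (auto simp: msum_index)

lemma msum_mono_neutral:
  assumes "finite U" "V \<subseteq> U" "\<And>b. b \<in> U - V \<Longrightarrow> f b = 0\<^sub>m r c"
  shows "msum r c U f = msum r c V f"
  by (rule eq_matI) (use assms in \<open>auto simp: msum_index intro!: sum.mono_neutral_right\<close>)

lemma msum_add:
  assumes "\<And>b. b \<in> U \<Longrightarrow> f b \<in> carrier_mat r c" "\<And>b. b \<in> U \<Longrightarrow> g b \<in> carrier_mat r c"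
  shows "msum r c U (\<lambda>b. f b + g b) = msum r c U f + msum r c U g"
proof (rule eq_matI)
  fix p q assume "p < dim_row (msum r c U f + msum r c U g)" "q < dim_col (msum r c U f + msum r c U g)"
  then have p: "p < r" and q: "q < c" by auto
  have "(\<Sum>b\<in>U. (f b + g b) $$ (p, q)) = (\<Sum>b\<in>U. f b $$ (p, q) + g b $$ (p, q))"
    using assms p q by (intro sum.cong) (auto dest!: assms)
  then show "msum r c U (\<lambda>b. f b + g b) $$ (p, q) = (msum r c U f + msum r c U g) $$ (p, q)"
    using p q by (simp add: msum_index sum.distrib)
qed auto

lemma msum_uminus:
  fixes f :: "'b \<Rightarrow> 'a :: ab_group_add mat"
  assumes "\<And>b. b \<in> U \<Longrightarrow> f b \<in> carrier_mat r c"
  shows "msum r c U (\<lambda>b. - f b) = - msum r c U f"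
proof (rule eq_matI)
  fix p q assume "p < dim_row (- msum r c U f)" "q < dim_col (- msum r c U f)"
  then have p: "p < r" and q: "q < c" by auto
  have "(\<Sum>b\<in>U. (- f b) $$ (p, q)) = (\<Sum>b\<in>U. - (f b $$ (p, q)))"
    using p q by (intro sum.cong) (auto dest!: assms)
  then show "msum r c U (\<lambda>b. - f b) $$ (p, q) = (- msum r c U f) $$ (p, q)"
    using p q by (simp add: msum_index sum_negf)
qed auto

lemma msum_mult_left:
  fixes X :: "'a :: comm_semiring_0 mat"
  assumes X: "X \<in> carrier_mat r m" and f: "\<And>b. b \<in> U \<Longrightarrow> f b \<in> carrier_mat m c"
  shows "X * msum m c U f = msum r c U (\<lambda>b. X * f b)"
proof (rule eq_matI)
  fix p q assume "p < dim_row (msum r c U (\<lambda>b. X * f b))" "q < dim_col (msum r c U (\<lambda>b. X * f b))"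
  then have p: "p < r" and q: "q < c" by auto
  have "(X * msum m c U f) $$ (p, q) = (\<Sum>s<m. X $$ (p, s) * (\<Sum>b\<in>U. f b $$ (s, q)))"
    using X p q by (simp add: scalar_prod_def msum_index lessThan_atLeast0)
  also have "\<dots> = (\<Sum>b\<in>U. \<Sum>s<m. X $$ (p, s) * f b $$ (s, q))"
    by (simp add: sum_distrib_left sum.swap[of _ U])
  also have "\<dots> = (\<Sum>b\<in>U. (X * f b) $$ (p, q))"
    using X p q by (intro sum.cong) (auto dest!: f simp: scalar_prod_def lessThan_atLeast0)
  finally show "(X * msum m c U f) $$ (p, q) = msum r c U (\<lambda>b. X * f b) $$ (p, q)"
    using p q by (simp add: msum_index)
qed (use X in auto)

lemma foldl_add_eq_msum:
  assumes "distinct xs" "x0 \<in> carrier_mat r c" "\<And>k. k \<in> set xs \<Longrightarrow> g k \<in> carrier_mat r c"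
  shows "foldl (\<lambda>acc k. acc + g k) x0 xs = x0 + msum r c (set xs) g"
  using assms
proof (induction xs arbitrary: x0)
  case Nil
  then show ?case by (simp add: msum_empty)
next
  case (Cons x xs)
  have "foldl (\<lambda>acc k. acc + g k) x0 (x # xs) = (x0 + g x) + msum r c (set xs) g"
    using Cons by auto
  also have "\<dots> = x0 + (g x + msum r c (set xs) g)"
    using Cons by (auto intro!: assoc_add_mat)
  also have "\<dots> = x0 + msum r c (set (x # xs)) g"
    using Cons by (simp add: msum_insert)
  finally show ?case .
qed

section \<open>Cluster blocks\<close>

text \<open>The block \<open>blk cl n X a b\<close> lists the entries of \<open>X\<close> whose row lies in cluster \<open>a\<close> and
  whose column lies in cluster \<open>b\<close>; the \<open>p\<close>-th row of the block is the \<open>p\<close>-th smallest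
  index of cluster \<open>a\<close>, i.e. \<open>pick (cluster cl n a) p\<close>.\<close>

abbreviation csize :: "(nat \<Rightarrow> nat) \<Rightarrow> nat \<Rightarrow> nat \<Rightarrow> nat" where
  "csize cl n a \<equiv> card (cluster cl n a)"

lemma cluster_finite [simp]: "finite (cluster cl n a)"
  unfolding cluster_def by auto

lemma pick_cluster_less: "p < csize cl n a \<Longrightarrow> pick (cluster cl n a) p < n"
  using pick_in_set_le[of p "cluster cl n a"] unfolding cluster_def by auto

lemma cluster_below: "{k. k < n \<and> k \<in> cluster cl n a} = cluster cl n a"
  unfolding cluster_def by auto

lemma blk_carrier:
  "X \<in> carrier_mat n n \<Longrightarrow> blk cl n X a b \<in> carrier_mat (csize cl n a) (csize cl n b)"
  unfolding blk_def carrier_mat_def by (simp add: dim_submatrix cluster_below)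

lemma blk_index:
  "X \<in> carrier_mat n n \<Longrightarrow> p < csize cl n a \<Longrightarrow> q < csize cl n b \<Longrightarrow>
   blk cl n X a b $$ (p, q) = X $$ (pick (cluster cl n a) p, pick (cluster cl n b) q)"
  unfolding blk_def by (rule submatrix_index) (simp_all add: cluster_below)

lemma pick_bij_betw:
  assumes "finite S"
  shows "bij_betw (pick S) {..<card S} S"
proof (rule bij_betw_imageI)
  show "inj_on (pick S) {..<card S}"
  proof (rule inj_onI)
    fix x y assume "x \<in> {..<card S}" "y \<in> {..<card S}" and eq: "pick S x = pick S y"
    then have "x < card S" "y < card S" by auto
    then have "x = card {a\<in>S. a < pick S x}" "y = card {a\<in>S. a < pick S y}"
      by (simp_all add: card_pick_le)
    then show "x = y" by (simp add: eq)
  qed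
  show "pick S ` {..<card S} = S"
  proof
    show "pick S ` {..<card S} \<subseteq> S"
      by (auto intro: pick_in_set_le)
    show "S \<subseteq> pick S ` {..<card S}"
    proof
      fix s assume s: "s \<in> S"
      have "card {a\<in>S. a < s} < card S"
        using s assms by (intro psubset_card_mono) auto
      moreover have "s = pick S (card {a\<in>S. a < s})"
        by (rule pick_card_in_set[OF s, symmetric])
      ultimately show "s \<in> pick S ` {..<card S}" by auto
    qed
  qed
qed

lemma blk_mult:
  assumes X: "X \<in> carrier_mat n n" and Y: "Y \<in> carrier_mat n n"
    and cl: "\<forall>k<n. cl k \<in> C" and C: "finite C"
  shows "blk cl n (X * Y) a b
           = msum (csize cl n a) (csize cl n b) C (\<lambda>c. blk cl n X a c * blk cl n Y c b)"
proof (rule eq_matI)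
  let ?d = "csize cl n" and ?pk = "\<lambda>c. pick (cluster cl n c)"
  have XY: "X * Y \<in> carrier_mat n n" using X Y by auto
  fix p q assume "p < dim_row (msum (?d a) (?d b) C (\<lambda>c. blk cl n X a c * blk cl n Y c b))"
    "q < dim_col (msum (?d a) (?d b) C (\<lambda>c. blk cl n X a c * blk cl n Y c b))"
  then have p: "p < ?d a" and q: "q < ?d b" by auto
  define u v where "u = ?pk a p" and "v = ?pk b q"
  have u: "u < n" and v: "v < n" using pick_cluster_less p q unfolding u_def v_def by auto
  have "blk cl n (X * Y) a b $$ (p, q) = (\<Sum>t<n. X $$ (u, t) * Y $$ (t, v))"
    using X Y u v by (simp add: blk_index[OF XY p q] u_def v_def scalar_prod_def lessThan_atLeast0)
  also have "\<dots> = (\<Sum>c\<in>C. \<Sum>t\<in>cluster cl n c. X $$ (u, t) * Y $$ (t, v))"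
  proof -
    have "cluster cl n c = {t \<in> {..<n}. cl t = c}" for c unfolding cluster_def by auto
    then show ?thesis by (simp only:) (rule sum.group[symmetric], use cl C in auto)
  qed
  also have "\<dots> = (\<Sum>c\<in>C. \<Sum>s<?d c. X $$ (u, ?pk c s) * Y $$ (?pk c s, v))"
    by (intro sum.cong refl sum.reindex_bij_betw[symmetric] pick_bij_betw cluster_finite)
  also have "\<dots> = (\<Sum>c\<in>C. (blk cl n X a c * blk cl n Y c b) $$ (p, q))"
  proof (rule sum.cong[OF refl])
    fix c
    have "blk cl n X a c \<in> carrier_mat (?d a) (?d c)" "blk cl n Y c b \<in> carrier_mat (?d c) (?d b)"
      using X Y by (auto intro: blk_carrier)
    then show "(\<Sum>s<?d c. X $$ (u, ?pk c s) * Y $$ (?pk c s, v)) = (blk cl n X a c * blk cl n Y c b) $$ (p, q)"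
      using p q by (simp add: scalar_prod_def lessThan_atLeast0 blk_index[OF X] blk_index[OF Y] u_def v_def)
  qed
  finally show "blk cl n (X * Y) a b $$ (p, q)
      = msum (?d a) (?d b) C (\<lambda>c. blk cl n X a c * blk cl n Y c b) $$ (p, q)"
    using p q by (simp add: msum_index)
qed (use blk_carrier[of "X * Y" n cl a b] X Y in auto)

lemma blk_adjoint:
  assumes X: "X \<in> carrier_mat n n"
  shows "blk cl n (mat_adjoint X) a b = mat_adjoint (blk cl n X b a)"
proof -
  have X': "mat_adjoint X \<in> carrier_mat n n" using X by auto
  show ?thesis
  proof (rule eq_matI)
    note dims = blk_carrier[OF X, of cl b a] blk_carrier[OF X', of cl a b]
    fix p q assume "p < dim_row (mat_adjoint (blk cl n X b a))" "q < dim_col (mat_adjoint (blk cl n X b a))"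
    then have p: "p < csize cl n a" and q: "q < csize cl n b" using dims by auto
    show "blk cl n (mat_adjoint X) a b $$ (p, q) = mat_adjoint (blk cl n X b a) $$ (p, q)"
      using X dims p q pick_cluster_less[OF p] pick_cluster_less[OF q]
      by (simp add: blk_index[OF X' p q] blk_index[OF X q p])
  qed (use blk_carrier[OF X, of cl b a] blk_carrier[OF X', of cl a b] in auto)
qed

lemma blk_uminus:
  assumes X: "X \<in> carrier_mat n n"
  shows "blk cl n (- X) a b = - blk cl n X a b"
proof -
  have X': "- X \<in> carrier_mat n n" using X by auto
  show ?thesis
  proof (rule eq_matI)
    note dims = blk_carrier[OF X, of cl a b]
    fix p q assume "p < dim_row (- blk cl n X a b)" "q < dim_col (- blk cl n X a b)"
    then have p: "p < csize cl n a" and q: "q < csize cl n b" using dims by auto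
    show "blk cl n (- X) a b $$ (p, q) = (- blk cl n X a b) $$ (p, q)"
      using X dims p q pick_cluster_less[OF p] pick_cluster_less[OF q]
      by (simp add: blk_index[OF X' p q] blk_index[OF X p q])
  qed (use blk_carrier[OF X, of cl a b] blk_carrier[OF X', of cl a b] in auto)
qed

lemma blk_transpose:
  assumes X: "X \<in> carrier_mat n n"
  shows "blk cl n (transpose_mat X) a b = transpose_mat (blk cl n X b a)"
proof -
  have X': "transpose_mat X \<in> carrier_mat n n" using X by auto
  show ?thesis
  proof (rule eq_matI)
    note dims = blk_carrier[OF X, of cl b a]
    fix p q assume "p < dim_row (transpose_mat (blk cl n X b a))" "q < dim_col (transpose_mat (blk cl n X b a))"
    then have p: "p < csize cl n a" and q: "q < csize cl n b" using dims by auto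
    show "blk cl n (transpose_mat X) a b $$ (p, q) = transpose_mat (blk cl n X b a) $$ (p, q)"
      using X dims p q pick_cluster_less[OF p] pick_cluster_less[OF q]
      by (simp add: blk_index[OF X' p q] blk_index[OF X q p])
  qed (use blk_carrier[OF X, of cl b a] blk_carrier[OF X', of cl a b] in auto)
qed

lemma minv_props:
  assumes X: "X \<in> carrier_mat m m" and inv: "invertible_mat X"
  shows "minv X \<in> carrier_mat m m" "X * minv X = 1\<^sub>m m" "minv X * X = 1\<^sub>m m"
proof -
  obtain B where B: "inverts_mat X B" "inverts_mat B X"
    using inv unfolding invertible_mat_def by auto
  have "dim_col (X * B) = dim_col (1\<^sub>m m :: complex mat)"
    using B(1) X unfolding inverts_mat_def by auto
  moreover have "dim_col (B * X) = dim_col (1\<^sub>m (dim_row B) :: complex mat)"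
    using B(2) unfolding inverts_mat_def by auto
  ultimately have "B \<in> carrier_mat (dim_row X) (dim_row X)"
    using X by auto
  with B have "\<exists>Y. Y \<in> carrier_mat (dim_row X) (dim_row X) \<and> inverts_mat X Y \<and> inverts_mat Y X"
    by blast
  then have "minv X \<in> carrier_mat (dim_row X) (dim_row X) \<and> inverts_mat X (minv X) \<and> inverts_mat (minv X) X"
    unfolding minv_def by (rule someI_ex)
  then show "minv X \<in> carrier_mat m m" "X * minv X = 1\<^sub>m m" "minv X * X = 1\<^sub>m m"
    using X unfolding inverts_mat_def by auto
qed

lemma minv_symmetric:
  assumes X: "X \<in> carrier_mat m m" and inv: "invertible_mat X" and sym: "transpose_mat X = X"
  shows "transpose_mat (minv X) = minv X"
proof -
  note Xi = minv_props[OF X inv]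
  have T: "transpose_mat (minv X) \<in> carrier_mat m m" using Xi(1) by simp
  have "transpose_mat (minv X) * X = transpose_mat (X * minv X)"
    using transpose_mult[OF X Xi(1)] sym by simp
  also have "\<dots> = 1\<^sub>m m" using Xi(2) by simp
  finally have left_inv: "transpose_mat (minv X) * X = 1\<^sub>m m" .
  have "transpose_mat (minv X) = transpose_mat (minv X) * (X * minv X)" using T Xi(2) by simp
  also have "\<dots> = (transpose_mat (minv X) * X) * minv X" using T X Xi(1) by simp
  also have "\<dots> = minv X" using left_inv Xi(1) by simp
  finally show ?thesis .
qed

section \<open>Elimination trees and processing orders\<close>

definition level_order :: "(nat \<Rightarrow> nat) \<Rightarrow> nat list \<Rightarrow> nat list \<Rightarrow> nat list" where
  "level_order lev L ls = concat (map (\<lambda>l. filter (\<lambda>i. lev i = l) L) ls)"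

lemma set_level_order: "set (level_order lev L ls) = {x \<in> set L. lev x \<in> set ls}"
  unfolding level_order_def by auto

lemma distinct_level_order: "distinct L \<Longrightarrow> distinct ls \<Longrightarrow> distinct (level_order lev L ls)"
proof (induction ls)
  case Nil
  then show ?case by (simp add: level_order_def)
next
  case (Cons l ls)
  then show ?case
    by (auto simp: level_order_def set_level_order[unfolded level_order_def])
qed

lemma sorted_level_order:
  assumes "sorted_wrt R ls" "\<And>x. R x x"
  shows "sorted_wrt (\<lambda>x y. R (lev x) (lev y)) (level_order lev L ls)"
  using assms(1)
proof (induction ls)
  case Nil
  then show ?case by (simp add: level_order_def)
next
  case (Cons l ls)
  have "sorted_wrt (\<lambda>x y. R (lev x) (lev y)) (filter (\<lambda>i. lev i = l) L)"
    using assms(2) by (induction L) auto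
  moreover have "sorted_wrt (\<lambda>x y. R (lev x) (lev y)) (level_order lev L ls)"
    using Cons by simp
  moreover have "\<forall>x\<in>set (filter (\<lambda>i. lev i = l) L). \<forall>y\<in>set (level_order lev L ls). R (lev x) (lev y)"
    using Cons(2) by (auto simp: set_level_order)
  ultimately show ?case
    by (simp add: level_order_def sorted_wrt_append)
qed

locale elimination_tree =
  fixes M lam r :: nat and par lev :: "nat \<Rightarrow> nat"
  assumes root: "r \<in> {1..M}" and par: "\<forall>i\<in>{1..M}. i \<noteq> r \<longrightarrow> par i \<in> {1..M}"
    and lev_range: "\<forall>i\<in>{1..M}. lev i \<in> {1..lam}"
    and lev_mono: "\<forall>i\<in>{1..M}. \<forall>j\<in>ancestors par r M i. lev i < lev j"
    and lev_root: "\<forall>i\<in>{1..M}. lev i = lam \<longleftrightarrow> i = r"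
begin

definition edges :: "(nat \<times> nat) set" where
  "edges = {(a, par a) | a. a \<in> {1..M} \<and> a \<noteq> r}"

lemma ancestors_iff: "j \<in> ancestors par r M i \<longleftrightarrow> (i, j) \<in> edges\<^sup>+"
  unfolding ancestors_def edges_def by simp

lemma edgesD: "(a, b) \<in> edges \<Longrightarrow> a \<in> {1..M} \<and> b \<in> {1..M} \<and> a \<noteq> r \<and> b = par a"
  unfolding edges_def using par by auto

lemma ancestor_in_clusters: "j \<in> ancestors par r M i \<Longrightarrow> i \<in> {1..M} \<and> j \<in> {1..M}"
  unfolding ancestors_iff by (metis edgesD tranclD tranclD2)

lemma ancestors_finite: "finite (ancestors par r M i)"
  by (rule finite_subset[of _ "{1..M}"]) (auto dest: ancestor_in_clusters)

lemma ancestor_trans: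
  "j \<in> ancestors par r M i \<Longrightarrow> k \<in> ancestors par r M j \<Longrightarrow> k \<in> ancestors par r M i"
  unfolding ancestors_iff by (rule trancl_trans)

lemma ancestor_level: "j \<in> ancestors par r M i \<Longrightarrow> lev i < lev j"
  using lev_mono ancestor_in_clusters by blast

lemma ancestor_irrefl: "i \<notin> ancestors par r M i"
  using ancestor_level by blast

lemma ancestors_root: "ancestors par r M r = {}"
  by (auto simp: ancestors_iff dest!: tranclD dest: edgesD)

text \<open>The ancestors of a cluster form a chain, since every cluster has at most one parent.\<close>

lemma ancestors_chain:
  assumes "j \<in> ancestors par r M i" "k \<in> ancestors par r M i"
  shows "related (ancestors par r M) j k"
proof -
  have sv: "single_valued edges"
    by (rule single_valuedI) (auto dest: edgesD)
  obtain z where z: "(i, z) \<in> edges" "(z, j) \<in> edges\<^sup>*"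
    using assms(1) tranclD unfolding ancestors_iff by metis
  obtain z' where z': "(i, z') \<in> edges" "(z', k) \<in> edges\<^sup>*"
    using assms(2) tranclD unfolding ancestors_iff by metis
  have "z' = z" by (rule single_valuedD[OF sv z'(1) z(1)])
  then have "(z, j) \<in> edges\<^sup>*" "(z, k) \<in> edges\<^sup>*" using z z' by simp_all
  then have "(j, k) \<in> edges\<^sup>* \<or> (k, j) \<in> edges\<^sup>*"
    by (rule single_valued_confluent[OF sv])
  then show ?thesis
    unfolding related_def ancestors_iff by (auto simp: rtrancl_eq_or_trancl)
qed

lemma level_root: "lev r = lam"
  using lev_root root by simp

lemma fwd_order_eq: "fwd_order lev lam M = level_order lev [1..<Suc M] [1..<lam]"
  and bwd_order_eq: "bwd_order lev lam M = level_order lev [1..<Suc M] (rev [1..<lam])"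
  unfolding fwd_order_def bwd_order_def level_order_def by (rule refl)+

lemma set_orders: "set (fwd_order lev lam M) = {1..M} - {r}" "set (bwd_order lev lam M) = {1..M} - {r}"
proof -
  have "lev x \<in> set [1..<lam] \<longleftrightarrow> x \<noteq> r" if "x \<in> {1..M}" for x
  proof -
    have "lev x \<in> {1..lam}" "lev x = lam \<longleftrightarrow> x = r" using lev_range lev_root that by auto
    then show ?thesis by auto
  qed
  moreover have "set [1..<Suc M] = {1..M}" by auto
  ultimately have sets: "{x \<in> set [1..<Suc M]. lev x \<in> set [1..<lam]} = {1..M} - {r}"
    by (simp only:) blast
  then show "set (fwd_order lev lam M) = {1..M} - {r}" "set (bwd_order lev lam M) = {1..M} - {r}"
    unfolding fwd_order_eq bwd_order_eq set_level_order set_rev by (simp_all only: sets)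
qed

lemma distinct_orders: "distinct (fwd_order lev lam M)" "distinct (bwd_order lev lam M)"
  unfolding fwd_order_eq bwd_order_eq by (auto intro!: distinct_level_order)

lemma fwd_order_split:
  assumes e: "fwd_order lev lam M = xs @ i # ys"
  shows "i \<in> {1..M}" "i \<noteq> r" "i \<notin> set xs"
    "\<And>a. a \<in> ancestors par r M i \<Longrightarrow> a \<notin> set xs"
    "\<And>a. a \<in> {1..M} \<Longrightarrow> a \<notin> set xs \<Longrightarrow> a \<noteq> i \<Longrightarrow> i \<notin> ancestors par r M a"
proof -
  have "i \<in> set (xs @ i # ys)" by simp
  then have i: "i \<in> {1..M} - {r}" using set_orders(1) e by (simp only:)
  then show "i \<in> {1..M}" "i \<noteq> r" by auto
  show "i \<notin> set xs" using distinct_orders(1) e by simp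
  have "sorted_wrt (\<lambda>x y. lev x \<le> lev y) (xs @ i # ys)"
    unfolding e[symmetric] fwd_order_eq by (rule sorted_level_order) simp_all
  then have sx: "\<forall>x\<in>set xs. lev x \<le> lev i" and sy: "\<forall>y\<in>set ys. lev i \<le> lev y"
    by (auto simp: sorted_wrt_append)
  show "a \<notin> set xs" if "a \<in> ancestors par r M i" for a
  proof
    assume "a \<in> set xs"
    then have "lev a \<le> lev i" using sx by simp
    then show False using ancestor_level[OF that] by simp
  qed
  fix a assume a: "a \<in> {1..M}" "a \<notin> set xs" "a \<noteq> i"
  show "i \<notin> ancestors par r M a"
  proof
    assume "i \<in> ancestors par r M a"
    then have la: "lev a < lev i" by (rule ancestor_level)
    have "lev i \<le> lam" using lev_range i by auto
    then have "a \<noteq> r" using la level_root by auto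
    then have "a \<in> set (xs @ i # ys)" using a(1) set_orders(1) e by auto
    then have "a \<in> set ys" using a by auto
    then show False using sy la by auto
  qed
qed

lemma bwd_order_split:
  assumes e: "bwd_order lev lam M = xs @ i # ys"
  shows "i \<in> {1..M}" "i \<noteq> r" "i \<notin> set xs"
    "\<And>a. a \<in> insert i (insert r (set xs)) \<Longrightarrow> ancestors par r M a \<subseteq> insert r (set xs)"
proof -
  have "i \<in> set (xs @ i # ys)" by simp
  then have i: "i \<in> {1..M} - {r}" using set_orders(2) e by (simp only:)
  then show "i \<in> {1..M}" "i \<noteq> r" by auto
  show "i \<notin> set xs" using distinct_orders(2) e by simp
  have "sorted_wrt (\<lambda>x y. lev x \<ge> lev y) (xs @ i # ys)"
    unfolding e[symmetric] bwd_order_eq by (rule sorted_level_order) (simp_all add: sorted_wrt_rev)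
  then have sx: "\<forall>x\<in>set xs. lev i \<le> lev x" and sy: "\<forall>y\<in>set ys. lev y \<le> lev i"
    by (auto simp: sorted_wrt_append)
  fix a assume a: "a \<in> insert i (insert r (set xs))"
  show "ancestors par r M a \<subseteq> insert r (set xs)"
  proof
    fix b assume b: "b \<in> ancestors par r M a"
    have "a \<noteq> r" using b ancestors_root by auto
    then have "lev i \<le> lev a" using a sx by auto
    moreover have "lev a < lev b" using b by (rule ancestor_level)
    ultimately have lb: "lev i < lev b" by simp
    show "b \<in> insert r (set xs)"
    proof (cases "b = r")
      case False
      have "b \<in> {1..M}" using b ancestor_in_clusters by simp
      then have "b \<in> set (xs @ i # ys)" using False set_orders(2) e by auto
      moreover have "b \<noteq> i" "b \<notin> set ys" using lb sy by auto
      ultimately show ?thesis by auto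
    qed simp
  qed
qed

end

locale selinv_setting = elimination_tree M lam r par lev
  for M lam r :: nat and par lev :: "nat \<Rightarrow> nat" +
  fixes n :: nat and cl :: "nat \<Rightarrow> nat" and A Sig :: "complex mat"
  assumes A: "A \<in> carrier_mat n n" and A_inv: "invertible_mat A"
    and A_sym: "transpose_mat A = A"
    and cl: "\<forall>k<n. cl k \<in> {1..M}"
    and sparse: "\<forall>i\<in>{1..M}. \<forall>j\<in>{1..M}. \<not> related (ancestors par r M) i j \<longrightarrow>
                   blk cl n A i j = 0\<^sub>m (csize cl n i) (csize cl n j)"
    and Sig: "Sig \<in> carrier_mat n n"
    and Sig_diag: "\<forall>i\<in>{1..M}. \<forall>j\<in>{1..M}. i \<noteq> j \<longrightarrow>
                   blk cl n Sig i j = 0\<^sub>m (csize cl n i) (csize cl n j)"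
    and Sig_skew: "mat_adjoint Sig = - Sig"
    and pivots_inv: "\<forall>i\<in>set (fwd_order lev lam M).
          invertible_mat (state_before (ancestors par r M) (blk cl n A) (fwd_order lev lam M) i i i)"
    and D_inv: "\<forall>i\<in>{1..M}. invertible_mat (Dblk (ancestors par r M) (blk cl n A) (fwd_order lev lam M) i)"
begin

abbreviation "Pa \<equiv> ancestors par r M"
abbreviation "clusters \<equiv> {1..M}"
abbreviation "ford \<equiv> fwd_order lev lam M"
abbreviation "bord \<equiv> bwd_order lev lam M"
abbreviation "sz \<equiv> csize cl n"
abbreviation "Ablk \<equiv> blk cl n A"
abbreviation "G \<equiv> minv A * Sig * mat_adjoint (minv A)"
abbreviation "Gblk \<equiv> blk cl n G"
abbreviation "before \<equiv> state_before Pa Ablk ford"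
abbreviation "\<Psi> \<equiv> Psi Pa Ablk ford"

lemma A_inverse: "minv A \<in> carrier_mat n n" "A * minv A = 1\<^sub>m n" "minv A * A = 1\<^sub>m n"
  using minv_props[OF A A_inv] by auto

lemma G_carrier: "G \<in> carrier_mat n n"
  using A_inverse Sig by auto

lemma Gblk_carrier: "Gblk a b \<in> carrier_mat (sz a) (sz b)"
  by (rule blk_carrier[OF G_carrier])

lemma Ablk_carrier: "Ablk a b \<in> carrier_mat (sz a) (sz b)"
  by (rule blk_carrier[OF A])

text \<open>This justifies the
  mirroring sub-step \<open>P(j, i) := - P(i, j)\<^sup>\<dagger>\<close> of the backward sweep.\<close>

lemma Gblk_skew: "Gblk a b = - mat_adjoint (Gblk b a)"
proof -
  have "mat_adjoint (Gblk b a) = blk cl n (mat_adjoint G) a b"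
    by (rule blk_adjoint[OF G_carrier, symmetric])
  also have "\<dots> = - Gblk a b"
    unfolding skew_hermitian_congruence[OF A_inverse(1) Sig Sig_skew] by (rule blk_uminus[OF G_carrier])
  finally show ?thesis using Gblk_carrier[of a b] by simp
qed

text \<open>Since \<open>A G = \<Sigma> (A\<inverse>)\<^sup>\<dagger>\<close> and \<open>\<Sigma>\<close> is block diagonal, the initial value
  \<open>N(j, k) = \<Sigma>(j, j) * (A\<inverse>)(k, j)\<^sup>\<dagger>\<close> is the block \<open>(j, k)\<close> of \<open>A G\<close>.\<close>

lemma A_times_G_blocks:
  assumes j: "j \<in> clusters"
  shows "msum (sz j) (sz k) clusters (\<lambda>b. Ablk j b * Gblk b k)
           = blk cl n Sig j j * mat_adjoint (blk cl n (minv A) k j)"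
proof -
  have Aa: "mat_adjoint (minv A) \<in> carrier_mat n n" using A_inverse by auto
  have fin: "finite clusters" by simp
  have AG: "A * G = Sig * mat_adjoint (minv A)"
  proof -
    have "A * G = A * (minv A * (Sig * mat_adjoint (minv A)))"
      by (simp only: assoc_mult_mat[OF A_inverse(1) Sig Aa])
    also have "\<dots> = (A * minv A) * (Sig * mat_adjoint (minv A))"
      by (rule assoc_mult_mat[symmetric, OF A A_inverse(1) mult_carrier_mat[OF Sig Aa]])
    finally show ?thesis using A_inverse(2) Sig Aa by simp
  qed
  have "msum (sz j) (sz k) clusters (\<lambda>b. Ablk j b * Gblk b k) = blk cl n (A * G) j k"
    by (rule blk_mult[OF A G_carrier cl fin, symmetric])
  also have "\<dots> = msum (sz j) (sz k) clusters (\<lambda>c. blk cl n Sig j c * blk cl n (mat_adjoint (minv A)) c k)"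
    unfolding AG by (rule blk_mult[OF Sig Aa cl fin])
  also have "\<dots> = msum (sz j) (sz k) {j} (\<lambda>c. blk cl n Sig j c * blk cl n (mat_adjoint (minv A)) c k)"
  proof (rule msum_mono_neutral[OF fin])
    show "{j} \<subseteq> clusters" using j by simp
    fix c assume "c \<in> clusters - {j}"
    then have "blk cl n Sig j c = 0\<^sub>m (sz j) (sz c)" using Sig_diag j by auto
    then show "blk cl n Sig j c * blk cl n (mat_adjoint (minv A)) c k = 0\<^sub>m (sz j) (sz k)"
      using blk_carrier[OF Aa, of cl c k] by simp
  qed
  also have "\<dots> = blk cl n Sig j j * mat_adjoint (blk cl n (minv A) k j)"
    using blk_carrier[OF Sig, of cl j j] blk_carrier[OF Aa, of cl j k]
    by (simp add: msum_single blk_adjoint[OF A_inverse(1)])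
  finally show ?thesis .
qed

end

section \<open>The forward sweep\<close>

text \<open>Write \<open>A[xs]\<close> for the block array after folding the clusters of a prefix \<open>xs\<close>
  of the forward order and \<open>N[xs]\<close> for the array \<open>N\<close> after the corresponding updates;
  the clusters outside \<open>xs\<close> are called active.
  Initially this is the block form of \<open>A G = \<Sigma> (A\<inverse>)\<^sup>\<dagger>\<close>. Folding \<open>i\<close> applies the same
  row operation \<open>row j += \<Psi> i j\<^sup>T * row i\<close> (\<open>j \<in> P i\<close>) to \<open>A\<close> and to \<open>N\<close>; as
  \<open>\<Psi> i j\<^sup>T * A i i = - A j i\<close>, this removes the term \<open>b = i\<close> from the sums of the
  ancestors of \<open>i\<close>, while for other active clusters that term vanishes by sparsity.\<close>

context selinv_setting
begin

abbreviation "N0 \<equiv> N_init Pa (blk cl n Sig) (blk cl n (minv A))"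
abbreviation "Afold xs \<equiv> folding Pa Ablk xs"
abbreviation "Nfold xs \<equiv> foldl (\<lambda>N i. N_step Pa (\<Psi> i) i N) N0 xs"

text \<open>\<open>Afold xs\<close> and \<open>Nfold xs\<close> are the arrays \<open>A[xs]\<close> and \<open>N[xs]\<close> described above.\<close>

definition fwd_inv :: "nat list \<Rightarrow> bool" where
 "fwd_inv xs \<longleftrightarrow>
   (\<forall>a\<in>clusters. \<forall>b\<in>clusters. Afold xs a b \<in> carrier_mat (sz a) (sz b)) \<and>
   (\<forall>a\<in>clusters - set xs. \<forall>b\<in>clusters - set xs. \<not> related Pa a b \<longrightarrow> Afold xs a b = 0\<^sub>m (sz a) (sz b)) \<and>
   (\<forall>a\<in>clusters - set xs. \<forall>b\<in>clusters - set xs. transpose_mat (Afold xs a b) = Afold xs b a) \<and>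
   (\<forall>j\<in>clusters - set xs. \<forall>k. (k \<in> Pa j \<or> k = j) \<longrightarrow>
       Nfold xs j k = msum (sz j) (sz k) (clusters - set xs) (\<lambda>b. Afold xs j b * Gblk b k)) \<and>
   (\<forall>x\<in>set xs. Afold xs x x = before x x x \<and> (\<forall>k. (k \<in> Pa x \<or> k = x) \<longrightarrow>
       Nfold xs x k = msum (sz x) (sz k) (Pa x \<union> {x}) (\<lambda>b. before x x b * Gblk b k)))"

lemma fwd_invI:
  assumes "\<And>a b. a \<in> clusters \<Longrightarrow> b \<in> clusters \<Longrightarrow> Afold xs a b \<in> carrier_mat (sz a) (sz b)"
    "\<And>a b. a \<in> clusters - set xs \<Longrightarrow> b \<in> clusters - set xs \<Longrightarrow> \<not> related Pa a b
        \<Longrightarrow> Afold xs a b = 0\<^sub>m (sz a) (sz b)"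
    "\<And>a b. a \<in> clusters - set xs \<Longrightarrow> b \<in> clusters - set xs \<Longrightarrow> transpose_mat (Afold xs a b) = Afold xs b a"
    "\<And>j k. j \<in> clusters - set xs \<Longrightarrow> k \<in> Pa j \<or> k = j \<Longrightarrow>
       Nfold xs j k = msum (sz j) (sz k) (clusters - set xs) (\<lambda>b. Afold xs j b * Gblk b k)"
    "\<And>x. x \<in> set xs \<Longrightarrow> Afold xs x x = before x x x"
    "\<And>x k. x \<in> set xs \<Longrightarrow> k \<in> Pa x \<or> k = x \<Longrightarrow>
       Nfold xs x k = msum (sz x) (sz k) (Pa x \<union> {x}) (\<lambda>b. before x x b * Gblk b k)"
  shows "fwd_inv xs"
  unfolding fwd_inv_def using assms by (intro conjI ballI allI impI) simp_all

lemma fwd_invD: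
  assumes "fwd_inv xs"
  shows "\<And>a b. a \<in> clusters \<Longrightarrow> b \<in> clusters \<Longrightarrow> Afold xs a b \<in> carrier_mat (sz a) (sz b)"
    "\<And>a b. a \<in> clusters - set xs \<Longrightarrow> b \<in> clusters - set xs \<Longrightarrow> \<not> related Pa a b
        \<Longrightarrow> Afold xs a b = 0\<^sub>m (sz a) (sz b)"
    "\<And>a b. a \<in> clusters - set xs \<Longrightarrow> b \<in> clusters - set xs \<Longrightarrow> transpose_mat (Afold xs a b) = Afold xs b a"
    "\<And>x. x \<in> set xs \<Longrightarrow> Afold xs x x = before x x x"
  using assms unfolding fwd_inv_def by simp_all

lemma fwd_inv_active:
  assumes "fwd_inv xs" "j \<in> clusters - set xs" "k \<in> Pa j \<or> k = j"
  shows "Nfold xs j k = msum (sz j) (sz k) (clusters - set xs) (\<lambda>b. Afold xs j b * Gblk b k)"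
proof -
  have c: "\<forall>j\<in>clusters - set xs. \<forall>k. (k \<in> Pa j \<or> k = j) \<longrightarrow>
       Nfold xs j k = msum (sz j) (sz k) (clusters - set xs) (\<lambda>b. Afold xs j b * Gblk b k)"
    using assms(1) unfolding fwd_inv_def by (elim conjE) assumption
  show ?thesis using mp[OF spec[OF bspec[OF c assms(2)], of k] assms(3)] .
qed

lemma fwd_inv_done:
  assumes "fwd_inv xs" "x \<in> set xs" "k \<in> Pa x \<or> k = x"
  shows "Nfold xs x k = msum (sz x) (sz k) (Pa x \<union> {x}) (\<lambda>b. before x x b * Gblk b k)"
proof -
  have c: "\<forall>x\<in>set xs. Afold xs x x = before x x x \<and> (\<forall>k. (k \<in> Pa x \<or> k = x) \<longrightarrow>
       Nfold xs x k = msum (sz x) (sz k) (Pa x \<union> {x}) (\<lambda>b. before x x b * Gblk b k))"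
    using assms(1) unfolding fwd_inv_def by (elim conjE) assumption
  show ?thesis using mp[OF spec[OF conjunct2[OF bspec[OF c assms(2)]], of k] assms(3)] .
qed

lemma fwd_inv_Nil: "fwd_inv []"
proof (rule fwd_invI)
  have e1: "Afold [] = Ablk" by (simp add: folding_def)
  have e2: "Nfold [] = N0" by simp
  show "\<And>a b. a \<in> clusters \<Longrightarrow> b \<in> clusters \<Longrightarrow> Afold [] a b \<in> carrier_mat (sz a) (sz b)"
    unfolding e1 by (rule Ablk_carrier)
  show "\<And>a b. a \<in> clusters - set [] \<Longrightarrow> b \<in> clusters - set [] \<Longrightarrow> \<not> related Pa a b
        \<Longrightarrow> Afold [] a b = 0\<^sub>m (sz a) (sz b)"
    unfolding e1 using sparse by simp
  show "\<And>a b. a \<in> clusters - set [] \<Longrightarrow> b \<in> clusters - set [] \<Longrightarrow> transpose_mat (Afold [] a b) = Afold [] b a"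
    unfolding e1 by (simp add: blk_transpose[OF A, symmetric] A_sym)
  show "\<And>j k. j \<in> clusters - set [] \<Longrightarrow> k \<in> Pa j \<or> k = j \<Longrightarrow>
       Nfold [] j k = msum (sz j) (sz k) (clusters - set []) (\<lambda>b. Afold [] j b * Gblk b k)"
  proof -
    fix j k assume j: "j \<in> clusters - set []" and k: "k \<in> Pa j \<or> k = j"
    have rel: "related Pa j k" using k unfolding related_def by auto
    have "Nfold [] j k = blk cl n Sig j j * mat_adjoint (blk cl n (minv A) k j)"
      unfolding e2 N_init_def using rel by simp
    also have "\<dots> = msum (sz j) (sz k) clusters (\<lambda>b. Ablk j b * Gblk b k)"
      using A_times_G_blocks[of j k] j by simp
    finally show "Nfold [] j k = msum (sz j) (sz k) (clusters - set []) (\<lambda>b. Afold [] j b * Gblk b k)"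
      unfolding e1 by simp
  qed
qed simp_all

context
  fixes xs i ys assumes sp: "ford = xs @ i # ys" and inv: "fwd_inv xs"
begin

lemma step_i_cluster: "i \<in> clusters" and step_i_not_done: "i \<notin> set xs"
  using fwd_order_split(1,3)[OF sp] by auto

lemma step_i_active: "i \<in> clusters - set xs" using step_i_cluster step_i_not_done by simp

lemma step_ancestors_active: "a \<in> Pa i \<Longrightarrow> a \<in> clusters - set xs"
  using fwd_order_split(4)[OF sp] ancestor_in_clusters by auto

lemma step_not_descendant: "a \<in> clusters - set xs \<Longrightarrow> a \<noteq> i \<Longrightarrow> i \<notin> Pa a"
  using fwd_order_split(5)[OF sp] by simp

lemma step_decoupled_zero: assumes "a \<in> clusters - set xs" "a \<noteq> i" "a \<notin> Pa i"
  shows "Afold xs i a = 0\<^sub>m (sz i) (sz a)" "Afold xs a i = 0\<^sub>m (sz a) (sz i)"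
proof -
  have "i \<notin> Pa a" using step_not_descendant assms by simp
  then have "\<not> related Pa i a" "\<not> related Pa a i" using assms unfolding related_def by auto
  then show "Afold xs i a = 0\<^sub>m (sz i) (sz a)" "Afold xs a i = 0\<^sub>m (sz a) (sz i)"
    using fwd_invD(2)[OF inv] step_i_active assms(1) by auto
qed

lemma step_before_eq: "before i = Afold xs"
proof -
  have "takeWhile (\<lambda>x. x \<noteq> i) (xs @ i # ys) = xs @ takeWhile (\<lambda>x. x \<noteq> i) (i # ys)"
    by (rule takeWhile_append2) (use step_i_not_done in auto)
  then have "takeWhile (\<lambda>x. x \<noteq> i) ford = xs" using sp by simp
  then show ?thesis unfolding state_before_def by simp
qed

lemma step_Psi_eq: "\<Psi> i c = - minv (Afold xs i i) * Afold xs i c"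
  unfolding Psi_def step_before_eq ..

lemma step_pivot_carrier: "Afold xs i i \<in> carrier_mat (sz i) (sz i)" using fwd_invD(1)[OF inv] step_i_cluster by simp

text \<open>The pivot \<open>A[xs] i i\<close> is invertible, with a symmetric inverse since it is a
  diagonal block of the symmetric active part.\<close>

lemma step_pivot_invertible: "invertible_mat (Afold xs i i)"
proof -
  have "i \<in> set ford" using sp by simp
  then have "invertible_mat (before i i i)" by (rule bspec[OF pivots_inv])
  then show ?thesis unfolding step_before_eq .
qed

lemma step_pivot_inverse: "minv (Afold xs i i) \<in> carrier_mat (sz i) (sz i)" "minv (Afold xs i i) * Afold xs i i = 1\<^sub>m (sz i)"
  "transpose_mat (minv (Afold xs i i)) = minv (Afold xs i i)"
proof -
  show "minv (Afold xs i i) \<in> carrier_mat (sz i) (sz i)" "minv (Afold xs i i) * Afold xs i i = 1\<^sub>m (sz i)"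
    using minv_props[OF step_pivot_carrier step_pivot_invertible] by auto
  have "transpose_mat (Afold xs i i) = Afold xs i i" using fwd_invD(3)[OF inv] step_i_active by simp
  then show "transpose_mat (minv (Afold xs i i)) = minv (Afold xs i i)"
    by (rule minv_symmetric[OF step_pivot_carrier step_pivot_invertible])
qed

lemma step_neg_pivot_inverse: "- minv (Afold xs i i) \<in> carrier_mat (sz i) (sz i)" using step_pivot_inverse(1) by simp

lemma step_Psi_carrier: "c \<in> clusters \<Longrightarrow> \<Psi> i c \<in> carrier_mat (sz i) (sz c)"
  unfolding step_Psi_eq using step_neg_pivot_inverse fwd_invD(1)[OF inv] step_i_cluster by (simp add: mult_carrier_mat)

text \<open>By symmetry, \<open>\<Psi> i j\<^sup>T = - A[xs] j i * (A[xs] i i)\<inverse>\<close>, hence the elimination identity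
  \<open>\<Psi> i j\<^sup>T * A[xs] i i = - A[xs] j i\<close>.\<close>

lemma step_transpose_Psi: assumes j: "j \<in> clusters - set xs"
  shows "transpose_mat (\<Psi> i j) = Afold xs j i * (- minv (Afold xs i i))"
proof -
  have cj: "Afold xs i j \<in> carrier_mat (sz i) (sz j)" using fwd_invD(1)[OF inv] step_i_cluster j by simp
  have "transpose_mat (\<Psi> i j) = transpose_mat (Afold xs i j) * transpose_mat (- minv (Afold xs i i))"
    unfolding step_Psi_eq by (rule transpose_mult[OF step_neg_pivot_inverse cj])
  also have "transpose_mat (Afold xs i j) = Afold xs j i" using fwd_invD(3)[OF inv] step_i_active j by simp
  also have "transpose_mat (- minv (Afold xs i i)) = - minv (Afold xs i i)"
    unfolding transpose_uminus step_pivot_inverse(3) ..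
  finally show ?thesis .
qed

lemma step_transpose_Psi_pivot: assumes j: "j \<in> clusters - set xs"
  shows "transpose_mat (\<Psi> i j) * Afold xs i i = - Afold xs j i"
proof -
  have cj: "Afold xs j i \<in> carrier_mat (sz j) (sz i)" using fwd_invD(1)[OF inv] step_i_cluster j by simp
  have "transpose_mat (\<Psi> i j) * Afold xs i i = Afold xs j i * (- minv (Afold xs i i) * Afold xs i i)"
    unfolding step_transpose_Psi[OF j] by (rule assoc_mult_mat[OF cj step_neg_pivot_inverse step_pivot_carrier])
  also have "- minv (Afold xs i i) * Afold xs i i = - (1\<^sub>m (sz i))"
    using step_pivot_inverse step_pivot_carrier by simp
  also have "Afold xs j i * - (1\<^sub>m (sz i)) = - Afold xs j i"
    using cj by simp
  finally show ?thesis .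
qed

lemma Afold_snoc: "Afold (xs @ [i]) = fold_step Pa i (Afold xs)"
  by (simp add: folding_def)

lemma Nfold_snoc: "Nfold (xs @ [i]) = N_step Pa (\<Psi> i) i (Nfold xs)"
  by simp

lemma step_fold_step_eq: "fold_step Pa i (Afold xs) a b =
  (if a \<in> Pa i \<and> b \<in> Pa i then Afold xs a b + transpose_mat (\<Psi> i a) * Afold xs i b
   else if (a = i \<and> b \<in> Pa i) \<or> (b = i \<and> a \<in> Pa i) then 0\<^sub>m (dim_row (Afold xs a b)) (dim_col (Afold xs a b))
   else Afold xs a b)"
  unfolding fold_step_def step_Psi_eq ..

lemma step_Afold_carrier: "a \<in> clusters \<Longrightarrow> b \<in> clusters
    \<Longrightarrow> Afold xs a b \<in> carrier_mat (sz a) (sz b)"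
  by (rule fwd_invD(1)[OF inv])

lemma step_transpose_Psi_carrier: "a \<in> clusters \<Longrightarrow> transpose_mat (\<Psi> i a) \<in> carrier_mat (sz a) (sz i)"
  using step_Psi_carrier by simp

text \<open>The structural parts of the invariant survive the Schur-complement update: dimensions,
  sparsity (the ancestors of \<open>i\<close> form a chain, so no new fill-in arises) and symmetry.\<close>

lemma step_carrier: assumes a: "a \<in> clusters" and b: "b \<in> clusters"
  shows "Afold (xs @ [i]) a b \<in> carrier_mat (sz a) (sz b)"
proof -
  have c1: "Afold xs a b \<in> carrier_mat (sz a) (sz b)" by (rule step_Afold_carrier[OF a b])
  have c2: "transpose_mat (\<Psi> i a) * Afold xs i b \<in> carrier_mat (sz a) (sz b)"
    by (rule mult_carrier_mat[OF step_transpose_Psi_carrier[OF a] step_Afold_carrier[OF step_i_cluster b]])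
  show ?thesis unfolding Afold_snoc step_fold_step_eq using c1 c2 by auto
qed

lemma step_sparse: assumes a: "a \<in> clusters - set (xs @ [i])" and b: "b \<in> clusters - set (xs @ [i])"
  and nr: "\<not> related Pa a b"
  shows "Afold (xs @ [i]) a b = 0\<^sub>m (sz a) (sz b)"
proof -
  have "\<not> (a \<in> Pa i \<and> b \<in> Pa i)" using ancestors_chain nr by blast
  moreover have "a \<noteq> i" "b \<noteq> i" using a b by auto
  ultimately have "Afold (xs @ [i]) a b = Afold xs a b" unfolding Afold_snoc step_fold_step_eq by auto
  also have "\<dots> = 0\<^sub>m (sz a) (sz b)" using fwd_invD(2)[OF inv] a b nr by simp
  finally show ?thesis .
qed

lemma step_symmetric: assumes a: "a \<in> clusters - set (xs @ [i])" and b: "b \<in> clusters - set (xs @ [i])"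
  shows "transpose_mat (Afold (xs @ [i]) a b) = Afold (xs @ [i]) b a"
proof (cases "a \<in> Pa i \<and> b \<in> Pa i")
  case True
  have aU: "a \<in> clusters - set xs" and bU: "b \<in> clusters - set xs" using a b by auto
  have aC: "a \<in> clusters" and bC: "b \<in> clusters" using a b by auto
  have e1: "Afold (xs @ [i]) a b = Afold xs a b + transpose_mat (\<Psi> i a) * Afold xs i b"
    unfolding Afold_snoc step_fold_step_eq using True by simp
  have e2: "Afold (xs @ [i]) b a = Afold xs b a + transpose_mat (\<Psi> i b) * Afold xs i a"
    unfolding Afold_snoc step_fold_step_eq using True by simp
  have "transpose_mat (Afold xs a b + transpose_mat (\<Psi> i a) * Afold xs i b)
      = transpose_mat (Afold xs a b) + transpose_mat (transpose_mat (\<Psi> i a) * Afold xs i b)"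
    by (rule transpose_add[OF step_Afold_carrier[OF aC bC]
        mult_carrier_mat[OF step_transpose_Psi_carrier[OF aC] step_Afold_carrier[OF step_i_cluster bC]]])
  also have "transpose_mat (Afold xs a b) = Afold xs b a" using fwd_invD(3)[OF inv] aU bU by simp
  also have "transpose_mat (transpose_mat (\<Psi> i a) * Afold xs i b) = transpose_mat (Afold xs i b) * \<Psi> i a"
    using transpose_mult[OF step_transpose_Psi_carrier[OF aC] step_Afold_carrier[OF step_i_cluster bC]] by simp
  also have "transpose_mat (Afold xs i b) = Afold xs b i" using fwd_invD(3)[OF inv] step_i_active bU by simp
  also have "Afold xs b i * \<Psi> i a = transpose_mat (\<Psi> i b) * Afold xs i a"
  proof -
    have "Afold xs b i * \<Psi> i a = Afold xs b i * (- minv (Afold xs i i) * Afold xs i a)" unfolding step_Psi_eq ..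
    also have "\<dots> = (Afold xs b i * (- minv (Afold xs i i))) * Afold xs i a"
      by (rule assoc_mult_mat[OF step_Afold_carrier[OF bC step_i_cluster] step_neg_pivot_inverse
        step_Afold_carrier[OF step_i_cluster aC], symmetric])
    also have "\<dots> = transpose_mat (\<Psi> i b) * Afold xs i a" unfolding step_transpose_Psi[OF bU] ..
    finally show ?thesis .
  qed
  finally show ?thesis unfolding e1 e2 .
next
  case False
  have "a \<noteq> i" "b \<noteq> i" using a b by auto
  then have "Afold (xs @ [i]) a b = Afold xs a b" "Afold (xs @ [i]) b a = Afold xs b a"
    unfolding Afold_snoc step_fold_step_eq using False by auto
  then show ?thesis using fwd_invD(3)[OF inv] a b by simp
qed


text \<open>A folded cluster is never an ancestor of the cluster being folded, so its rows are
  left alone from then on.\<close>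

lemma step_done_not_ancestor: "x \<in> set (xs @ [i]) \<Longrightarrow> x \<notin> Pa i"
  using step_ancestors_active ancestor_irrefl by auto

lemma step_pivot: "x \<in> set (xs @ [i]) \<Longrightarrow> Afold (xs @ [i]) x x = before x x x"
proof -
  assume x: "x \<in> set (xs @ [i])"
  have "Afold (xs @ [i]) x x = Afold xs x x"
    unfolding Afold_snoc step_fold_step_eq using step_done_not_ancestor[OF x] by simp
  also have "\<dots> = before x x x"
    using x step_before_eq fwd_invD(4)[OF inv] by (cases "x = i") auto
  finally show ?thesis .
qed

text \<open>For the cluster being folded, the sum for \<open>N i k\<close> reduces to \<open>P i \<union> {i}\<close> by sparsity.\<close>

lemma step_done:
  assumes x: "x \<in> set (xs @ [i])" and k: "k \<in> Pa x \<or> k = x"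
  shows "Nfold (xs @ [i]) x k = msum (sz x) (sz k) (Pa x \<union> {x}) (\<lambda>b. before x x b * Gblk b k)"
proof -
  have e: "Nfold (xs @ [i]) x k = Nfold xs x k"
    unfolding Nfold_snoc N_step_def using step_done_not_ancestor[OF x] by simp
  show ?thesis
  proof (cases "x = i")
    case False
    then have "x \<in> set xs" using x by simp
    then show ?thesis unfolding e by (rule fwd_inv_done[OF inv _ k])
  next
    case True
    have "Nfold xs i k = msum (sz i) (sz k) (clusters - set xs) (\<lambda>b. Afold xs i b * Gblk b k)"
      using fwd_inv_active[OF inv step_i_active] k True by simp
    also have "\<dots> = msum (sz i) (sz k) (Pa i \<union> {i}) (\<lambda>b. Afold xs i b * Gblk b k)"
    proof (rule msum_mono_neutral)
      show "finite (clusters - set xs)" by simp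
      show "Pa i \<union> {i} \<subseteq> clusters - set xs" using step_ancestors_active step_i_active by auto
      fix b assume b: "b \<in> clusters - set xs - (Pa i \<union> {i})"
      then have "Afold xs i b = 0\<^sub>m (sz i) (sz b)" using step_decoupled_zero(1)[of b] by simp
      then show "Afold xs i b * Gblk b k = 0\<^sub>m (sz i) (sz k)" using Gblk_carrier[of b k] by simp
    qed
    finally show ?thesis using e True step_before_eq by simp
  qed
qed

lemma step_peel_pivot:
  assumes j: "j \<in> clusters - set xs" and k: "k \<in> Pa j \<or> k = j"
  shows "Nfold xs j k = Afold xs j i * Gblk i k
           + msum (sz j) (sz k) (clusters - set (xs @ [i])) (\<lambda>b. Afold xs j b * Gblk b k)"
proof -
  let ?U = "clusters - set (xs @ [i])"
  have U: "clusters - set xs = insert i ?U" using step_i_active by auto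
  have fin: "finite ?U" and iU: "i \<notin> ?U" by simp_all
  have c: "Afold xs j i * Gblk i k \<in> carrier_mat (sz j) (sz k)"
    using j by (intro mult_carrier_mat[OF step_Afold_carrier[OF _ step_i_cluster] Gblk_carrier]) simp
  show ?thesis
    using fwd_inv_active[OF inv j k]
    unfolding U msum_insert[where f = "\<lambda>b. Afold xs j b * Gblk b k", OF fin iU c] .
qed

lemma step_row_times_G:
  assumes j: "j \<in> Pa i" and b: "b \<in> clusters - set (xs @ [i])"
  shows "Afold (xs @ [i]) j b * Gblk b k
           = Afold xs j b * Gblk b k + transpose_mat (\<Psi> i j) * (Afold xs i b * Gblk b k)"
proof -
  have jC: "j \<in> clusters" and bC: "b \<in> clusters" using j b ancestor_in_clusters by auto
  note Tj = step_transpose_Psi_carrier[OF jC] and Aib = step_Afold_carrier[OF step_i_cluster bC]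
  show ?thesis
  proof (cases "b \<in> Pa i")
    case True
    have "Afold (xs @ [i]) j b = Afold xs j b + transpose_mat (\<Psi> i j) * Afold xs i b"
      unfolding Afold_snoc step_fold_step_eq using True j by simp
    then have "Afold (xs @ [i]) j b * Gblk b k
        = Afold xs j b * Gblk b k + (transpose_mat (\<Psi> i j) * Afold xs i b) * Gblk b k"
      using add_mult_distrib_mat[OF step_Afold_carrier[OF jC bC] mult_carrier_mat[OF Tj Aib] Gblk_carrier]
      by simp
    also have "(transpose_mat (\<Psi> i j) * Afold xs i b) * Gblk b k = transpose_mat (\<Psi> i j) * (Afold xs i b * Gblk b k)"
      by (rule assoc_mult_mat[OF Tj Aib Gblk_carrier])
    finally show ?thesis .
  next
    case False
    have "Afold (xs @ [i]) j b = Afold xs j b"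
      unfolding Afold_snoc step_fold_step_eq using False j b ancestor_irrefl by auto
    moreover have "Afold xs i b = 0\<^sub>m (sz i) (sz b)" using step_decoupled_zero(1)[of b] b False by simp
    moreover have "Afold xs j b * Gblk b k \<in> carrier_mat (sz j) (sz k)"
      by (rule mult_carrier_mat[OF step_Afold_carrier[OF jC bC] Gblk_carrier])
    ultimately show ?thesis using Tj Gblk_carrier[of b k] by simp
  qed
qed

text \<open>The row operation on an ancestor \<open>j\<close> of \<open>i\<close>: the pivot terms cancel, because
  \<open>\<Psi> i j\<^sup>T * A i i = - A j i\<close>.\<close>

lemma step_active_ancestor:
  assumes j: "j \<in> Pa i" and k: "k \<in> Pa j \<or> k = j"
  shows "Nfold (xs @ [i]) j k = msum (sz j) (sz k) (clusters - set (xs @ [i])) (\<lambda>b. Afold (xs @ [i]) j b * Gblk b k)"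
proof -
  let ?U = "clusters - set (xs @ [i])"
  have jU: "j \<in> clusters - set xs" and jC: "j \<in> clusters" using j step_ancestors_active by auto
  have kP: "k \<in> Pa i" using k j ancestor_trans by auto
  have UC: "b \<in> ?U \<Longrightarrow> b \<in> clusters" for b by simp
  define S1 where "S1 = msum (sz j) (sz k) ?U (\<lambda>b. Afold xs j b * Gblk b k)"
  define S2 where "S2 = msum (sz i) (sz k) ?U (\<lambda>b. Afold xs i b * Gblk b k)"
  define X where "X = Afold xs j i * Gblk i k"
  define T where "T = transpose_mat (\<Psi> i j)"
  have Tc: "T \<in> carrier_mat (sz j) (sz i)" unfolding T_def by (rule step_transpose_Psi_carrier[OF jC])
  have Xc: "X \<in> carrier_mat (sz j) (sz k)"
    unfolding X_def by (rule mult_carrier_mat[OF step_Afold_carrier[OF jC step_i_cluster] Gblk_carrier])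
  have S1c: "S1 \<in> carrier_mat (sz j) (sz k)" unfolding S1_def by simp
  have S2c: "S2 \<in> carrier_mat (sz i) (sz k)" unfolding S2_def by simp
  have cJ: "b \<in> ?U \<Longrightarrow> Afold xs j b * Gblk b k \<in> carrier_mat (sz j) (sz k)" for b
    using mult_carrier_mat[OF step_Afold_carrier[OF jC] Gblk_carrier] UC by blast
  have cI: "b \<in> ?U \<Longrightarrow> Afold xs i b * Gblk b k \<in> carrier_mat (sz i) (sz k)" for b
    using mult_carrier_mat[OF step_Afold_carrier[OF step_i_cluster] Gblk_carrier] UC by blast
  have BGc: "Afold xs i i * Gblk i k \<in> carrier_mat (sz i) (sz k)"
    by (rule mult_carrier_mat[OF step_pivot_carrier Gblk_carrier])
  have Ni: "Nfold xs i k = Afold xs i i * Gblk i k + S2"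
    unfolding S2_def using step_peel_pivot[OF step_i_active, of k] kP by simp
  have "Nfold (xs @ [i]) j k = Nfold xs j k + T * Nfold xs i k"
    unfolding Nfold_snoc N_step_def T_def using j kP by simp
  also have "T * Nfold xs i k = T * (Afold xs i i * Gblk i k) + T * S2"
    unfolding Ni by (rule mult_add_distrib_mat[OF Tc BGc S2c])
  also have "T * (Afold xs i i * Gblk i k) = (T * Afold xs i i) * Gblk i k"
    by (rule assoc_mult_mat[OF Tc step_pivot_carrier Gblk_carrier, symmetric])
  also have "T * Afold xs i i = - Afold xs j i" unfolding T_def by (rule step_transpose_Psi_pivot[OF jU])
  also have "- Afold xs j i * Gblk i k = - X" unfolding X_def
    by (rule uminus_mult_left_mat) (use step_Afold_carrier[OF jC step_i_cluster] Gblk_carrier[of i k] in auto)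
  also have "Nfold xs j k = X + S1" unfolding step_peel_pivot[OF jU k] X_def S1_def ..
  also have "(X + S1) + (- X + T * S2) = S1 + T * S2"
    by (rule add_cancel_mat[OF Xc S1c mult_carrier_mat[OF Tc S2c]])
  also have "T * S2 = msum (sz j) (sz k) ?U (\<lambda>b. T * (Afold xs i b * Gblk b k))"
    unfolding S2_def by (rule msum_mult_left[OF Tc cI])
  also have "S1 + \<dots> = msum (sz j) (sz k) ?U (\<lambda>b. Afold xs j b * Gblk b k + T * (Afold xs i b * Gblk b k))"
    unfolding S1_def by (rule msum_add[symmetric]) (use cJ cI Tc in auto)
  also have "\<dots> = msum (sz j) (sz k) ?U (\<lambda>b. Afold (xs @ [i]) j b * Gblk b k)"
    by (rule msum_cong) (use step_row_times_G[OF j] in \<open>simp add: T_def\<close>)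
  finally show ?thesis .
qed

text \<open>Rows of active clusters outside \<open>P i\<close> are untouched, and their pivot term vanishes.\<close>

lemma step_active_other:
  assumes j: "j \<in> clusters - set (xs @ [i])" and k: "k \<in> Pa j \<or> k = j" and False: "j \<notin> Pa i"
  shows "Nfold (xs @ [i]) j k = msum (sz j) (sz k) (clusters - set (xs @ [i])) (\<lambda>b. Afold (xs @ [i]) j b * Gblk b k)"
proof -
  have jU: "j \<in> clusters - set xs" and ji: "j \<noteq> i" using j by auto
  have "Afold xs j i = 0\<^sub>m (sz j) (sz i)" using step_decoupled_zero(2)[OF jU ji False] .
  then have zero: "Afold xs j i * Gblk i k = 0\<^sub>m (sz j) (sz k)" using Gblk_carrier[of i k] by simp
  have "Nfold (xs @ [i]) j k = Nfold xs j k"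
    unfolding Nfold_snoc N_step_def using False by simp
  also have "\<dots> = msum (sz j) (sz k) (clusters - set (xs @ [i])) (\<lambda>b. Afold xs j b * Gblk b k)"
    unfolding step_peel_pivot[OF jU k] zero by simp
  also have "\<dots> = msum (sz j) (sz k) (clusters - set (xs @ [i])) (\<lambda>b. Afold (xs @ [i]) j b * Gblk b k)"
  proof (rule msum_cong)
    fix b assume "b \<in> clusters - set (xs @ [i])"
    then show "Afold xs j b * Gblk b k = Afold (xs @ [i]) j b * Gblk b k"
      using False ji by (simp add: Afold_snoc step_fold_step_eq)
  qed
  finally show ?thesis .
qed

lemma fwd_inv_snoc: "fwd_inv (xs @ [i])"
proof (rule fwd_invI)
  fix j k assume "j \<in> clusters - set (xs @ [i])" "k \<in> Pa j \<or> k = j"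
  then show "Nfold (xs @ [i]) j k
      = msum (sz j) (sz k) (clusters - set (xs @ [i])) (\<lambda>b. Afold (xs @ [i]) j b * Gblk b k)"
    using step_active_ancestor step_active_other by (cases "j \<in> Pa i") auto
qed (fact step_carrier step_sparse step_symmetric step_pivot step_done)+

end

lemma fwd_inv_prefix: "ford = xs @ ys \<Longrightarrow> fwd_inv xs"
proof (induction xs arbitrary: ys rule: rev_induct)
  case Nil
  show ?case by (rule fwd_inv_Nil)
next
  case (snoc x xs)
  then have sp: "ford = xs @ x # ys" by simp
  then have "fwd_inv xs" using snoc.IH by simp
  then show ?case by (rule fwd_inv_snoc[OF sp])
qed

lemma fwd_inv_complete: "fwd_inv ford"
  using fwd_inv_prefix[of ford "[]"] by simp

end

section \<open>From the forward sweep to the initial values of \<open>P\<close>\<close>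

text \<open>Every other cluster \<open>i\<close> has a frozen
  pivot row, and dividing it by \<open>D i\<close> turns the invariant into the identity
  \<open>G i k = P i k + \<Sum>c \<in> P i. \<Psi> i c * G c k\<close> for the initial values \<open>P = D\<inverse> N\<close>; at the
  root it gives \<open>P r r = G r r\<close> directly.\<close>

context selinv_setting
begin

abbreviation "Nfinal \<equiv> Nfold ford"
abbreviation "D \<equiv> Dblk Pa Ablk ford"
abbreviation "P0 \<equiv> P_init Pa D Nfinal"

lemma clusters_minus_ford: "clusters - set ford = {r}"
  using root unfolding set_orders(1) by blast

lemma D_eq: "D i = Afold ford i i"
  unfolding Dblk_def ..

lemma D_carrier: "i \<in> clusters \<Longrightarrow> D i \<in> carrier_mat (sz i) (sz i)"
  unfolding D_eq by (rule fwd_invD(1)[OF fwd_inv_complete])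

lemma D_inverse: "i \<in> clusters \<Longrightarrow> minv (D i) \<in> carrier_mat (sz i) (sz i)
    \<and> minv (D i) * D i = 1\<^sub>m (sz i)"
  using minv_props[OF D_carrier D_inv[rule_format]] by auto

lemma P0_root: "P0 r r = Gblk r r"
proof -
  have rU: "r \<in> clusters - set ford" using clusters_minus_ford by simp
  have "Nfinal r r = msum (sz r) (sz r) {r} (\<lambda>b. Afold ford r b * Gblk b r)"
    using fwd_inv_active[OF fwd_inv_complete rU, of r] clusters_minus_ford by simp
  also have "\<dots> = D r * Gblk r r" unfolding D_eq
    by (rule msum_single[where f="\<lambda>b. Afold ford r b * Gblk b r",
          OF mult_carrier_mat[OF fwd_invD(1)[OF fwd_inv_complete root root] Gblk_carrier]])
  finally have "P0 r r = minv (D r) * (D r * Gblk r r)"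
    unfolding P_init_def related_def by simp
  also have "\<dots> = (minv (D r) * D r) * Gblk r r"
    using assoc_mult_mat[OF conjunct1[OF D_inverse[OF root]] D_carrier[OF root] Gblk_carrier[of r r]] by simp
  also have "\<dots> = Gblk r r" using D_inverse[OF root] Gblk_carrier[of r r] by simp
  finally show ?thesis .
qed

lemma frozen_row:
  assumes i: "i \<in> clusters" and i_root: "i \<noteq> r"
  shows "D i = before i i i"
    and "\<And>c. c \<in> clusters \<Longrightarrow> before i i c \<in> carrier_mat (sz i) (sz c)"
    and "\<And>c. \<Psi> i c = - minv (D i) * before i i c"
proof -
  have i_ford: "i \<in> set ford" using set_orders(1) i i_root by simp
  then obtain xs ys where sp: "ford = xs @ i # ys" using split_list[of i ford] by auto
  have inv: "fwd_inv xs" by (rule fwd_inv_prefix[of xs "i # ys"]) (use sp in simp)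
  show D: "D i = before i i i" unfolding D_eq using fwd_invD(4)[OF fwd_inv_complete i_ford] .
  show "\<And>c. c \<in> clusters \<Longrightarrow> before i i c \<in> carrier_mat (sz i) (sz c)"
    unfolding step_before_eq[OF sp inv] using fwd_invD(1)[OF inv] i by simp
  show "\<And>c. \<Psi> i c = - minv (D i) * before i i c"
    unfolding Psi_def D ..
qed

lemma Psi_carrier:
  assumes i: "i \<in> clusters" and i_root: "i \<noteq> r" and c: "c \<in> clusters"
  shows "\<Psi> i c \<in> carrier_mat (sz i) (sz c)"
  unfolding frozen_row(3)[OF i i_root] using D_inverse[OF i] frozen_row(2)[OF i i_root c] by auto

lemma D_inv_times_frozen_row:
  assumes i: "i \<in> clusters" and i_root: "i \<noteq> r" and c: "c \<in> clusters"
  shows "minv (D i) * before i i c = - \<Psi> i c"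
proof -
  have "minv (D i) * before i i c \<in> carrier_mat (sz i) (sz c)"
    using D_inverse[OF i] frozen_row(2)[OF i i_root c] by auto
  moreover have "\<Psi> i c = - (minv (D i) * before i i c)"
    unfolding frozen_row(3)[OF i i_root]
    by (rule uminus_mult_left_mat) (use D_inverse[OF i] frozen_row(2)[OF i i_root c] in auto)
  ultimately show ?thesis by simp
qed

lemma Nfinal_frozen_row:
  assumes i: "i \<in> clusters" and i_root: "i \<noteq> r" and k: "k \<in> Pa i \<or> k = i"
  shows "Nfinal i k = D i * Gblk i k + msum (sz i) (sz k) (Pa i) (\<lambda>b. before i i b * Gblk b k)"
proof -
  have i_ford: "i \<in> set ford" using set_orders(1) i i_root by simp
  have "Nfinal i k = msum (sz i) (sz k) (insert i (Pa i)) (\<lambda>b. before i i b * Gblk b k)"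
    using fwd_inv_done[OF fwd_inv_complete i_ford k] by simp
  also have "\<dots> = D i * Gblk i k + msum (sz i) (sz k) (Pa i) (\<lambda>b. before i i b * Gblk b k)"
    unfolding frozen_row(1)[OF i i_root]
    by (rule msum_insert[where f = "\<lambda>b. before i i b * Gblk b k", OF ancestors_finite ancestor_irrefl
          mult_carrier_mat[OF frozen_row(2)[OF i i_root i] Gblk_carrier]])
  finally show ?thesis .
qed

lemma D_inv_times_frozen_sum:
  assumes i: "i \<in> clusters" and i_root: "i \<noteq> r"
  shows "minv (D i) * msum (sz i) (sz k) (Pa i) (\<lambda>b. before i i b * Gblk b k)
           = - msum (sz i) (sz k) (Pa i) (\<lambda>c. \<Psi> i c * Gblk c k)"
proof -
  note Dinv = conjunct1[OF D_inverse[OF i]]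
  have PaC: "\<And>c. c \<in> Pa i \<Longrightarrow> c \<in> clusters" using ancestor_in_clusters by auto
  have "minv (D i) * msum (sz i) (sz k) (Pa i) (\<lambda>b. before i i b * Gblk b k)
       = msum (sz i) (sz k) (Pa i) (\<lambda>b. minv (D i) * (before i i b * Gblk b k))"
    using mult_carrier_mat[OF frozen_row(2)[OF i i_root] Gblk_carrier] PaC
    by (intro msum_mult_left[OF Dinv]) blast
  also have "\<dots> = msum (sz i) (sz k) (Pa i) (\<lambda>c. - (\<Psi> i c * Gblk c k))"
  proof (rule msum_cong)
    fix c assume c: "c \<in> Pa i"
    have "minv (D i) * (before i i c * Gblk c k) = (minv (D i) * before i i c) * Gblk c k"
      by (rule assoc_mult_mat[OF Dinv frozen_row(2)[OF i i_root PaC[OF c]] Gblk_carrier, symmetric])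
    also have "\<dots> = - (\<Psi> i c * Gblk c k)"
      unfolding D_inv_times_frozen_row[OF i i_root PaC[OF c]]
      by (rule uminus_mult_left_mat) (use Psi_carrier[OF i i_root PaC[OF c]] Gblk_carrier[of c k] in auto)
    finally show "minv (D i) * (before i i c * Gblk c k) = - (\<Psi> i c * Gblk c k)" .
  qed
  also have "\<dots> = - msum (sz i) (sz k) (Pa i) (\<lambda>c. \<Psi> i c * Gblk c k)"
    using mult_carrier_mat[OF Psi_carrier[OF i i_root] Gblk_carrier] PaC
    by (intro msum_uminus) blast
  finally show ?thesis .
qed

lemma P0_identity:
  assumes i: "i \<in> clusters" and i_root: "i \<noteq> r" and k: "k \<in> Pa i \<or> k = i"
  shows "P0 i k \<in> carrier_mat (sz i) (sz k)"
    "Gblk i k = P0 i k + msum (sz i) (sz k) (Pa i) (\<lambda>c. \<Psi> i c * Gblk c k)"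
proof -
  note Dc = D_carrier[OF i] and Dinv = D_inverse[OF i]
  define S where "S = msum (sz i) (sz k) (Pa i) (\<lambda>c. \<Psi> i c * Gblk c k)"
  have Sc: "S \<in> carrier_mat (sz i) (sz k)" unfolding S_def by simp
  have "P0 i k = minv (D i) * Nfinal i k"
    unfolding P_init_def related_def using k by auto
  also have "\<dots> = minv (D i) * (D i * Gblk i k)
      + minv (D i) * msum (sz i) (sz k) (Pa i) (\<lambda>b. before i i b * Gblk b k)"
    unfolding Nfinal_frozen_row[OF i i_root k]
    by (rule mult_add_distrib_mat[OF conjunct1[OF Dinv] mult_carrier_mat[OF Dc Gblk_carrier] msum_carrier])
  also have "minv (D i) * (D i * Gblk i k) = Gblk i k"
    using assoc_mult_mat[OF conjunct1[OF Dinv] Dc Gblk_carrier[of i k]] Dinv Gblk_carrier[of i k] by simp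
  finally have P0f: "P0 i k = Gblk i k + - S"
    unfolding D_inv_times_frozen_sum[OF i i_root] S_def .
  show "P0 i k \<in> carrier_mat (sz i) (sz k)" unfolding P0f using Sc Gblk_carrier[of i k] by simp
  show "Gblk i k = P0 i k + S" unfolding P0f
    by (rule eq_matI) (use Sc Gblk_carrier[of i k] in auto)
qed

end

section \<open>The backward sweep\<close>

text \<open>Call the root and the clusters of a prefix \<open>xs\<close> of the backward order treated. Ancestors are treated before their descendants, so when
  \<open>i\<close> is reached all blocks \<open>P k b\<close> with \<open>k, b \<in> P i\<close> are blocks of \<open>G\<close> (the ancestors
  form a chain), and the three sub-steps turn the identity of \<open>P0_identity\<close> into
  \<open>P i b = G i b\<close>, then use skew-Hermitian symmetry for \<open>P b i\<close>, and finally obtain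
  \<open>P i i\<close>.\<close>

context selinv_setting
begin

abbreviation "Pfold xs \<equiv> foldl (\<lambda>P i. P_step Pa (\<Psi> i) i P) P0 xs"

definition bwd_inv :: "nat list \<Rightarrow> bool" where
 "bwd_inv xs \<longleftrightarrow> (\<forall>a\<in>insert r (set xs). \<forall>b. (b \<in> Pa a \<or> b = a)
        \<longrightarrow> Pfold xs a b = Gblk a b \<and> Pfold xs b a = Gblk b a)
    \<and> (\<forall>a\<in>clusters - insert r (set xs). \<forall>b. (b \<in> Pa a \<or> b = a) \<longrightarrow> Pfold xs a b = P0 a b)"

lemma bwd_inv_treated: assumes "bwd_inv xs" "a \<in> insert r (set xs)" "b \<in> Pa a \<or> b = a"
  shows "Pfold xs a b = Gblk a b" "Pfold xs b a = Gblk b a"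
proof -
  have c: "\<forall>a\<in>insert r (set xs). \<forall>b. (b \<in> Pa a \<or> b = a)
        \<longrightarrow> Pfold xs a b = Gblk a b \<and> Pfold xs b a = Gblk b a"
    using assms(1) unfolding bwd_inv_def by (elim conjE) assumption
  note h = mp[OF spec[OF bspec[OF c assms(2)], of b] assms(3)]
  show "Pfold xs a b = Gblk a b" "Pfold xs b a = Gblk b a" using h by simp_all
qed

lemma bwd_inv_pending: assumes "bwd_inv xs" "a \<in> clusters - insert r (set xs)" "b \<in> Pa a \<or> b = a"
  shows "Pfold xs a b = P0 a b"
proof -
  have c: "\<forall>a\<in>clusters - insert r (set xs). \<forall>b. (b \<in> Pa a \<or> b = a) \<longrightarrow> Pfold xs a b = P0 a b"
    using assms(1) unfolding bwd_inv_def by (elim conjE) assumption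
  show ?thesis using mp[OF spec[OF bspec[OF c assms(2)], of b] assms(3)] .
qed

lemma bwd_invI:
  assumes "\<And>a b. a \<in> insert r (set xs) \<Longrightarrow> b \<in> Pa a \<or> b = a
        \<Longrightarrow> Pfold xs a b = Gblk a b \<and> Pfold xs b a = Gblk b a"
    "\<And>a b. a \<in> clusters - insert r (set xs) \<Longrightarrow> b \<in> Pa a \<or> b = a \<Longrightarrow> Pfold xs a b = P0 a b"
  shows "bwd_inv xs"
  unfolding bwd_inv_def using assms by (intro conjI ballI allI impI) simp_all

lemma bwd_inv_Nil: "bwd_inv []"
proof (rule bwd_invI)
  fix a b assume a: "a \<in> insert r (set [])" and b: "b \<in> Pa a \<or> b = a"
  then have "a = r" "b = r" using ancestors_root by auto
  then show "Pfold [] a b = Gblk a b \<and> Pfold [] b a = Gblk b a" using P0_root by simp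
qed simp

context
  fixes xs i ys assumes sp: "bord = xs @ i # ys" and inv: "bwd_inv xs"
begin

abbreviation "anc \<equiv> sorted_list_of_set (Pa i)"
abbreviation "Pcur \<equiv> Pfold xs"
abbreviation "Prow a b \<equiv> (if a = i \<and> b \<in> Pa i then foldl (\<lambda>acc k. acc + \<Psi> i k * Pcur k b)
      (Pcur i b) anc else Pcur a b)"
abbreviation "Pcol a b \<equiv> (if b = i \<and> a \<in> Pa i then - mat_adjoint (Prow i a) else Prow a b)"

lemma back_i_cluster: "i \<in> clusters" and back_i_not_root: "i \<noteq> r" and back_i_not_done: "i \<notin> set xs"
  using bwd_order_split(1-3)[OF sp] by auto

lemma back_i_untreated: "i \<notin> insert r (set xs)" using back_i_not_root back_i_not_done by simp

lemma back_ancestors_treated: "Pa i \<subseteq> insert r (set xs)"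
  using bwd_order_split(4)[OF sp, of i] by simp

lemma back_treated_closed: "a \<in> insert r (set xs) \<Longrightarrow> Pa a \<subseteq> insert r (set xs)"
  using bwd_order_split(4)[OF sp] by simp

lemma Pfold_snoc: "Pfold (xs @ [i]) = P_step Pa (\<Psi> i) i Pcur"
  by simp

lemma back_P_step_eq: "P_step Pa (\<Psi> i) i Pcur = (\<lambda>a b. if a = i \<and> b = i then foldl (\<lambda>acc j. acc + \<Psi> i j * Pcol j i) (Pcol i i) anc else Pcol a b)"
  unfolding P_step_def Let_def ..

lemma back_set_anc: "set anc = Pa i" and back_distinct_anc: "distinct anc"
  using ancestors_finite by auto

text \<open>Blocks among the ancestors of \<open>i\<close> are already blocks of \<open>G\<close>, since the ancestors
  form a chain.\<close>

lemma back_ancestor_blocks: assumes k: "k \<in> Pa i" and b: "b \<in> Pa i" shows "Pcur k b = Gblk k b"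
proof -
  have kT: "k \<in> insert r (set xs)" and bT: "b \<in> insert r (set xs)" using back_ancestors_treated k b by auto
  have "related Pa k b" by (rule ancestors_chain[OF k b])
  then consider "k = b" | "k \<in> Pa b" | "b \<in> Pa k" unfolding related_def by auto
  then show ?thesis
  proof cases
    case 1 then show ?thesis using bwd_inv_treated(1)[OF inv kT] by simp
  next
    case 2 then show ?thesis using bwd_inv_treated(2)[OF inv bT] by simp
  next
    case 3 then show ?thesis using bwd_inv_treated(1)[OF inv kT] by simp
  qed
qed

lemma back_i_pending: "i \<in> clusters - insert r (set xs)" using back_i_cluster back_i_untreated by simp

text \<open>Row sub-step: the accumulated sum is the right-hand side of \<open>P0_identity\<close>.\<close>

lemma back_row_update: assumes b: "b \<in> Pa i" shows "Prow i b = Gblk i b"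
proof -
  have bC: "b \<in> clusters" using b ancestor_in_clusters by auto
  have Pib: "Pcur i b = P0 i b" using bwd_inv_pending[OF inv back_i_pending] b by simp
  have P0c: "P0 i b \<in> carrier_mat (sz i) (sz b)" using P0_identity(1)[OF back_i_cluster back_i_not_root] b by simp
  have cK: "\<And>k. k \<in> set anc \<Longrightarrow> \<Psi> i k * Pcur k b \<in> carrier_mat (sz i) (sz b)"
  proof -
    fix k assume "k \<in> set anc" then have k: "k \<in> Pa i" using back_set_anc by simp
    then have kC: "k \<in> clusters" using ancestor_in_clusters by auto
    show "\<Psi> i k * Pcur k b \<in> carrier_mat (sz i) (sz b)" unfolding back_ancestor_blocks[OF k b]
      by (rule mult_carrier_mat[OF Psi_carrier[OF back_i_cluster back_i_not_root kC] Gblk_carrier])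
  qed
  have "Prow i b = foldl (\<lambda>acc k. acc + \<Psi> i k * Pcur k b) (Pcur i b) anc" using b by simp
  also have "\<dots> = Pcur i b + msum (sz i) (sz b) (set anc) (\<lambda>k. \<Psi> i k * Pcur k b)"
    by (rule foldl_add_eq_msum[OF back_distinct_anc _ cK]) (use Pib P0c in simp)
  also have "msum (sz i) (sz b) (set anc) (\<lambda>k. \<Psi> i k * Pcur k b)
        = msum (sz i) (sz b) (Pa i) (\<lambda>k. \<Psi> i k * Gblk k b)"
    unfolding back_set_anc by (rule msum_cong) (simp add: back_ancestor_blocks[OF _ b])
  also have "Pcur i b + \<dots> = Gblk i b" unfolding Pib using P0_identity(2)[OF back_i_cluster back_i_not_root, of b] b by simp
  finally show ?thesis .
qed

text \<open>Mirror sub-step, by the skew-Hermitian symmetry of \<open>G\<close>.\<close>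

lemma back_column_update: assumes a: "a \<in> Pa i" shows "Pcol a i = Gblk a i"
proof -
  have "Pcol a i = - mat_adjoint (Prow i a)" using a ancestor_irrefl by auto
  also have "\<dots> = - mat_adjoint (Gblk i a)" unfolding back_row_update[OF a] ..
  also have "\<dots> = Gblk a i" using Gblk_skew[of a i] by simp
  finally show ?thesis .
qed

text \<open>Diagonal sub-step, again by \<open>P0_identity\<close>.\<close>

lemma back_diagonal_update: "P_step Pa (\<Psi> i) i Pcur i i = Gblk i i"
proof -
  have iP: "i \<notin> Pa i" by (rule ancestor_irrefl)
  have Pii: "Pcur i i = P0 i i" using bwd_inv_pending[OF inv back_i_pending] by simp
  have P0c: "P0 i i \<in> carrier_mat (sz i) (sz i)" using P0_identity(1)[OF back_i_cluster back_i_not_root] by simp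
  have e2: "Pcol i i = P0 i i" using iP Pii by simp
  have cK: "\<And>j. j \<in> set anc \<Longrightarrow> \<Psi> i j * Pcol j i \<in> carrier_mat (sz i) (sz i)"
  proof -
    fix j assume "j \<in> set anc" then have j: "j \<in> Pa i" using back_set_anc by simp
    then have jC: "j \<in> clusters" using ancestor_in_clusters by auto
    show "\<Psi> i j * Pcol j i \<in> carrier_mat (sz i) (sz i)" unfolding back_column_update[OF j]
      by (rule mult_carrier_mat[OF Psi_carrier[OF back_i_cluster back_i_not_root jC] Gblk_carrier])
  qed
  have "P_step Pa (\<Psi> i) i Pcur i i = foldl (\<lambda>acc j. acc + \<Psi> i j * Pcol j i) (Pcol i i) anc"
    unfolding back_P_step_eq by simp
  also have "\<dots> = Pcol i i + msum (sz i) (sz i) (set anc) (\<lambda>j. \<Psi> i j * Pcol j i)"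
    by (rule foldl_add_eq_msum[OF back_distinct_anc _ cK]) (use e2 P0c in simp)
  also have "msum (sz i) (sz i) (set anc) (\<lambda>j. \<Psi> i j * Pcol j i)
        = msum (sz i) (sz i) (Pa i) (\<lambda>j. \<Psi> i j * Gblk j i)"
    unfolding back_set_anc
  proof (rule msum_cong)
    fix j assume j: "j \<in> Pa i"
    show "\<Psi> i j * Pcol j i = \<Psi> i j * Gblk j i" by (subst back_column_update[OF j]) (rule refl)
  qed
  also have "Pcol i i + \<dots> = Gblk i i" unfolding e2 using P0_identity(2)[OF back_i_cluster back_i_not_root, of i] by simp
  finally show ?thesis .
qed

lemma back_other_blocks: "a \<noteq> i \<Longrightarrow> \<not> (b = i \<and> a \<in> Pa i) \<Longrightarrow> P_step Pa (\<Psi> i) i Pcur a b = Pcur a b"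
  unfolding back_P_step_eq by auto

lemma back_row: "b \<in> Pa i \<Longrightarrow> P_step Pa (\<Psi> i) i Pcur i b = Gblk i b"
proof -
  assume b: "b \<in> Pa i"
  then have "b \<noteq> i" using ancestor_irrefl by auto
  then have "P_step Pa (\<Psi> i) i Pcur i b = Prow i b" unfolding back_P_step_eq by simp
  then show ?thesis using back_row_update[OF b] by simp
qed

lemma back_column: "a \<in> Pa i \<Longrightarrow> P_step Pa (\<Psi> i) i Pcur a i = Gblk a i"
proof -
  assume a: "a \<in> Pa i"
  then have "a \<noteq> i" using ancestor_irrefl by auto
  then have "P_step Pa (\<Psi> i) i Pcur a i = Pcol a i" unfolding back_P_step_eq by simp
  then show ?thesis using back_column_update[OF a] by simp
qed

lemma bwd_inv_snoc: "bwd_inv (xs @ [i])"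
proof (rule bwd_invI)
  fix a b assume a: "a \<in> insert r (set (xs @ [i]))" and b: "b \<in> Pa a \<or> b = a"
  show "Pfold (xs @ [i]) a b = Gblk a b \<and> Pfold (xs @ [i]) b a = Gblk b a"
  proof (cases "a = i")
    case True
    then show ?thesis unfolding Pfold_snoc using b back_row back_column back_diagonal_update by auto
  next
    case False
    then have aT: "a \<in> insert r (set xs)" using a by simp
    then have bT: "b \<in> insert r (set xs)" using back_treated_closed b by auto
    then have bi: "b \<noteq> i" using back_i_untreated by auto
    have "P_step Pa (\<Psi> i) i Pcur a b = Pcur a b" using back_other_blocks False bi by simp
    moreover have "P_step Pa (\<Psi> i) i Pcur b a = Pcur b a" using back_other_blocks False bi by simp
    ultimately show ?thesis unfolding Pfold_snoc using bwd_inv_treated[OF inv aT b] by simp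
  qed
next
  fix a b assume a: "a \<in> clusters - insert r (set (xs @ [i]))" and b: "b \<in> Pa a \<or> b = a"
  have ai: "a \<noteq> i" using a by simp
  have aP: "a \<notin> Pa i" using back_ancestors_treated a by auto
  have aT: "a \<in> clusters - insert r (set xs)" using a by simp
  have "Pfold (xs @ [i]) a b = Pcur a b" unfolding Pfold_snoc using back_other_blocks ai aP by simp
  also have "\<dots> = P0 a b" by (rule bwd_inv_pending[OF inv aT b])
  finally show "Pfold (xs @ [i]) a b = P0 a b" .
qed

end

lemma bwd_inv_prefix: "bord = xs @ ys \<Longrightarrow> bwd_inv xs"
proof (induction xs arbitrary: ys rule: rev_induct)
  case Nil
  show ?case by (rule bwd_inv_Nil)
next
  case (snoc x xs)
  then have sp: "bord = xs @ x # ys" by simp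
  then have "bwd_inv xs" using snoc.IH by simp
  then show ?case by (rule bwd_inv_snoc[OF sp])
qed

lemma bwd_inv_complete: "bwd_inv bord"
  using bwd_inv_prefix[of bord "[]"] by simp

lemma bwd_inv_result: assumes i: "i \<in> clusters" and j: "j \<in> Pa i \<union> {i}"
  shows "Pfold bord i j = Gblk i j \<and> Pfold bord j i = Gblk j i"
proof -
  have "i \<in> insert r (set bord)" using i set_orders(2) by auto
  then show ?thesis using bwd_inv_treated[OF bwd_inv_complete, of i j] j by auto
qed

lemma selinv_eq: "selinv cl n par r M lev lam A Sig = Pfold bord"
  unfolding selinv_def Let_def ..

end

theorem mainTheorem3:
  fixes n M lam r :: nat and cl par lev :: "nat \<Rightarrow> nat" and A Sig :: "complex mat"
  defines "Pa \<equiv> ancestors par r M"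
  defines "ford \<equiv> fwd_order lev lam M"
  assumes A: "A \<in> carrier_mat n n" and A_inv: "invertible_mat A"
    and A_sym: "transpose_mat A = A"
    and cl: "\<forall>k<n. cl k \<in> {1..M}"
    and root: "r \<in> {1..M}" and par: "\<forall>i\<in>{1..M}. i \<noteq> r \<longrightarrow> par i \<in> {1..M}"
    and lev_range: "\<forall>i\<in>{1..M}. lev i \<in> {1..lam}"
    and lev_mono: "\<forall>i\<in>{1..M}. \<forall>j\<in>Pa i. lev i < lev j"
    and lev_root: "\<forall>i\<in>{1..M}. lev i = lam \<longleftrightarrow> i = r"
    and sparse: "\<forall>i\<in>{1..M}. \<forall>j\<in>{1..M}. \<not> related Pa i j \<longrightarrow>
                   blk cl n A i j = 0\<^sub>m (card (cluster cl n i)) (card (cluster cl n j))"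
    and Sig: "Sig \<in> carrier_mat n n"
    and Sig_diag: "\<forall>i\<in>{1..M}. \<forall>j\<in>{1..M}. i \<noteq> j \<longrightarrow>
                   blk cl n Sig i j = 0\<^sub>m (card (cluster cl n i)) (card (cluster cl n j))"
    and Sig_skew: "mat_adjoint Sig = - Sig"
    and piv_inv: "\<forall>i\<in>set ford. invertible_mat (state_before Pa (blk cl n A) ford i i i)"
    and D_inv: "\<forall>i\<in>{1..M}. invertible_mat (Dblk Pa (blk cl n A) ford i)"
  shows "\<forall>i\<in>{1..M}. \<forall>j\<in>Pa i \<union> {i}.
           selinv cl n par r M lev lam A Sig i j
             = blk cl n (minv A * Sig * mat_adjoint (minv A)) i j
         \<and> selinv cl n par r M lev lam A Sig j i
             = blk cl n (minv A * Sig * mat_adjoint (minv A)) j i"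
proof -
  interpret selinv_setting M lam r par lev n cl A Sig
    by unfold_locales
      (fact root par lev_range lev_mono[unfolded Pa_def] lev_root A A_inv A_sym cl
        sparse[unfolded Pa_def] Sig Sig_diag Sig_skew piv_inv[unfolded Pa_def ford_def]
        D_inv[unfolded Pa_def ford_def])+
  show ?thesis
    unfolding Pa_def selinv_eq using bwd_inv_result by blast
qed

end
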